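(* Let $R$ be a reduced root system in a finite-dimensional real vector space $V$, let $W=W(R)$ be its Weyl group, let $\geq$ be a total ordering of $V$ and let $\{\alpha_1,\ldots,\alpha_r\}$ be the corresponding base of $R$. Let $T=\{t_1,\ldots,t_m\}\subset W$ be a set of reflections, $t_i=s_{\beta_i}$ with $\beta_i\in R^+$. Let $W'$ be the subgroup of $W$ generated by $T$, let $R'=W'\cdot\{\beta_1,\ldots,\beta_m\}$ and let $V'$ be the linear span of $R'$. Then $R'$ is a root system in $V'$ and $W'$ (acting on $V'$ by restriction) is its Weyl group. Furthermore, if $\{\alpha'_1,\ldots,\alpha'_\ell\}$ is the base of $R'$ associated with the total ordering induced by $\geq$ on $V'$, then the set $\{s_{\alpha'_1},\ldots,s_{\alpha'_\ell}\}$ may be obtained from $T$ by a finite sequence of Nielsen transformations.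
   Context: A total ordering of $V$ means a total order compatible with the vector space structure ($x\geq y \iff x-y\geq 0$; $x>0,y>0\Rightarrow x+y>0$; $x>0$, $c>0$ real $\Rightarrow cx>0$). $R^+=\{\alpha\in R:\alpha>0\}$, and the base associated with the ordering is the set of positive roots that are not sums of two positive roots. $s_\alpha$ denotes the reflection in the root $\alpha$. A Nielsen transformation of a finite subset $\{t_1,\ldots,t_m\}$ of a group consists in choosing $i\neq j$ and replacing $t_j$ by $t_it_jt_i^{-1}$ (leaving the other elements unchanged), giving a new subset. *)

theory Defs
  imports "HOL-Analysis.Analysis" "HOL-Library.FuncSet"
begin

text \<open>Maps on V are represented
extensionally by restricted functions (restrict f V).\<close>

definition coroot_cond :: "'a::euclidean_space set \<Rightarrow> 'a \<Rightarrow> ('a \<Rightarrow> real) \<Rightarrow> bool" where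
  "coroot_cond R \<alpha> f \<longleftrightarrow> linear f \<and> f \<alpha> = 2 \<and>
      (\<forall>\<beta>\<in>R. \<beta> - f \<beta> *\<^sub>R \<alpha> \<in> R) \<and> (\<forall>\<beta>\<in>R. f \<beta> \<in> \<int>)"

definition root_system :: "'a::euclidean_space set \<Rightarrow> 'a set \<Rightarrow> bool" where
  "root_system V R \<longleftrightarrow> subspace V \<and> finite R \<and> R \<subseteq> V \<and> 0 \<notin> R \<and> span R = V \<and>
      (\<forall>\<alpha>\<in>R. \<exists>f. coroot_cond R \<alpha> f)"

definition reduced :: "'a::euclidean_space set \<Rightarrow> bool" where
  "reduced R \<longleftrightarrow> (\<forall>\<alpha>\<in>R. \<forall>c. c *\<^sub>R \<alpha> \<in> R \<longrightarrow> c = 1 \<or> c = -1)"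

definition coroot :: "'a::euclidean_space set \<Rightarrow> 'a \<Rightarrow> 'a \<Rightarrow> real" where
  "coroot R \<alpha> = (SOME f. coroot_cond R \<alpha> f)"

definition refl :: "'a::euclidean_space set \<Rightarrow> 'a set \<Rightarrow> 'a \<Rightarrow> ('a \<Rightarrow> 'a)" where
  "refl V R \<alpha> = restrict (\<lambda>x. x - coroot R \<alpha> x *\<^sub>R \<alpha>) V"

definition map_inv :: "'a set \<Rightarrow> ('a \<Rightarrow> 'a) \<Rightarrow> ('a \<Rightarrow> 'a)" where
  "map_inv V f = restrict (inv_into V f) V"

inductive_set gen_group :: "'a set \<Rightarrow> ('a \<Rightarrow> 'a) set \<Rightarrow> ('a \<Rightarrow> 'a) set"
  for V S where
  gen_id: "restrict id V \<in> gen_group V S"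
| gen_mult: "g \<in> gen_group V S \<Longrightarrow> s \<in> S \<Longrightarrow> compose V s g \<in> gen_group V S"
| gen_inv: "g \<in> gen_group V S \<Longrightarrow> s \<in> S \<Longrightarrow> compose V (map_inv V s) g \<in> gen_group V S"

definition weyl :: "'a::euclidean_space set \<Rightarrow> 'a set \<Rightarrow> ('a \<Rightarrow> 'a) set" where
  "weyl V R = gen_group V (refl V R ` R)"

definition lt_of :: "('a \<Rightarrow> 'a \<Rightarrow> bool) \<Rightarrow> 'a \<Rightarrow> 'a \<Rightarrow> bool" where
  "lt_of le x y \<longleftrightarrow> le x y \<and> x \<noteq> y"

definition vs_total_order :: "'a::real_vector set \<Rightarrow> ('a \<Rightarrow> 'a \<Rightarrow> bool) \<Rightarrow> bool" where
  "vs_total_order V le \<longleftrightarrow>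
     (\<forall>x\<in>V. le x x) \<and>
     (\<forall>x\<in>V. \<forall>y\<in>V. le x y \<and> le y x \<longrightarrow> x = y) \<and>
     (\<forall>x\<in>V. \<forall>y\<in>V. \<forall>z\<in>V. le x y \<and> le y z \<longrightarrow> le x z) \<and>
     (\<forall>x\<in>V. \<forall>y\<in>V. le x y \<or> le y x) \<and>
     (\<forall>x\<in>V. \<forall>y\<in>V. le y x \<longleftrightarrow> le 0 (x - y)) \<and>
     (\<forall>x\<in>V. \<forall>y\<in>V. lt_of le 0 x \<and> lt_of le 0 y \<longrightarrow> lt_of le 0 (x + y)) \<and>
     (\<forall>x\<in>V. \<forall>c::real. lt_of le 0 x \<and> c > 0 \<longrightarrow> lt_of le 0 (c *\<^sub>R x))"

definition pos_roots :: "('a \<Rightarrow> 'a \<Rightarrow> bool) \<Rightarrow> 'a::real_vector set \<Rightarrow> 'a set" where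
  "pos_roots le R = {\<alpha>\<in>R. lt_of le 0 \<alpha>}"

definition base :: "('a \<Rightarrow> 'a \<Rightarrow> bool) \<Rightarrow> 'a::real_vector set \<Rightarrow> 'a set" where
  "base le R = {\<alpha>\<in>pos_roots le R.
      \<not> (\<exists>\<beta>\<in>pos_roots le R. \<exists>\<gamma>\<in>pos_roots le R. \<alpha> = \<beta> + \<gamma>)}"

definition nielsen_step :: "'a set \<Rightarrow> ('a \<Rightarrow> 'a) set \<Rightarrow> ('a \<Rightarrow> 'a) set \<Rightarrow> bool" where
  "nielsen_step V S S' \<longleftrightarrow> (\<exists>ti\<in>S. \<exists>tj\<in>S. ti \<noteq> tj \<and>
      S' = insert (compose V (compose V ti tj) (map_inv V ti)) (S - {tj}))"

end

(*
  The orbit R' = W'B is stable under its own reflections, because the reflection in wb is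
  w s_b w^-1; restricting the coroots of R makes R' a root system in its span, and its Weyl
  group is W' since every reflection in R' is a word in the generators s_b.

  The Nielsen statement is proved by a descent on sets D of positive roots of R' whose
  reflections generate those of B.  Heights are measured by a linear functional that is
  positive exactly on the positive roots.  If two members a, b of D form an acute angle for
  a W-invariant inner product, then the Cartan integers of a, b are positive with product at
  most 3, so the Nielsen move replacing s_b by s_a s_b s_a (or the symmetric one) replaces a
  root by a positive root of smaller height.  When no acute pair is left, D is pairwise
  obtuse, so its Cartan pairs are of finite type.  Tits' argument, an induction on word length
  that reduces to the dihedral subsystems, shows that every root of R' is then a nonnegative
  or nonpositive combination of D, and this forces D to be the base of R'.
*)

theory Submission
  imports Defs
begin

section \<open>Coroots, reflections and words\<close>

locale root_sys =
  fixes V :: "'a::euclidean_space set" and R :: "'a set"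
  assumes root_system: "root_system V R"
begin

lemma subspace_V: "subspace V" and finite_R: "finite R" and R_subset_V: "R \<subseteq> V"
  and zero_notin_R: "0 \<notin> R" and span_R: "span R = V"
  using root_system unfolding root_system_def by auto

lemma root_in_V: "\<alpha> \<in> R \<Longrightarrow> \<alpha> \<in> V"
  using R_subset_V by auto

lemma root_nonzero: "\<alpha> \<in> R \<Longrightarrow> \<alpha> \<noteq> 0"
  using zero_notin_R by auto

lemma coroot_cond_coroot: "\<alpha> \<in> R \<Longrightarrow> coroot_cond R \<alpha> (coroot R \<alpha>)"
  using root_system unfolding root_system_def coroot_def by (metis someI_ex)

lemma linear_coroot: "\<alpha> \<in> R \<Longrightarrow> linear (coroot R \<alpha>)"
  and coroot_self: "\<alpha> \<in> R \<Longrightarrow> coroot R \<alpha> \<alpha> = 2"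
  and coroot_Ints: "\<alpha> \<in> R \<Longrightarrow> \<beta> \<in> R \<Longrightarrow> coroot R \<alpha> \<beta> \<in> \<int>"
  using coroot_cond_coroot unfolding coroot_cond_def by auto

lemma coroot_cond_shift:
  assumes f: "coroot_cond R \<alpha> f" and g: "coroot_cond R \<alpha> g" and y: "y \<in> R"
  shows "y + (g y - f y) *\<^sub>R \<alpha> \<in> R"
proof -
  have lf: "linear f" and f2: "f \<alpha> = 2" using f unfolding coroot_cond_def by auto
  have "y - g y *\<^sub>R \<alpha> \<in> R" using g y unfolding coroot_cond_def by auto
  then have "(y - g y *\<^sub>R \<alpha>) - f (y - g y *\<^sub>R \<alpha>) *\<^sub>R \<alpha> \<in> R"
    using f unfolding coroot_cond_def by auto
  moreover have "f (y - g y *\<^sub>R \<alpha>) = f y - 2 * g y"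
    using linear_diff[OF lf] linear_scale[OF lf] f2 by simp
  then have "(y - g y *\<^sub>R \<alpha>) - f (y - g y *\<^sub>R \<alpha>) *\<^sub>R \<alpha> = y + (g y - f y) *\<^sub>R \<alpha>"
    by (simp add: algebra_simps flip: scaleR_add_left)
  ultimately show ?thesis by simp
qed

text \<open>Bourbaki's uniqueness of the coroot: two admissible coroots differing at a root
  \<open>y\<close> would put the infinite string \<open>y + n (g y - f y) \<alpha>\<close> into the finite set \<open>R\<close>.\<close>

lemma coroot_cond_eq_on_R:
  assumes a: "\<alpha> \<in> R" and f: "coroot_cond R \<alpha> f" and g: "coroot_cond R \<alpha> g" and y: "y \<in> R"
  shows "f y = g y"
proof (rule ccontr)
  assume "f y \<noteq> g y"
  define d where "d = g y - f y"
  have d: "d \<noteq> 0" using \<open>f y \<noteq> g y\<close> d_def by simp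
  have lf: "linear f" and f2: "f \<alpha> = 2" and lg: "linear g" and g2: "g \<alpha> = 2"
    using f g unfolding coroot_cond_def by auto
  have string: "y + (real n * d) *\<^sub>R \<alpha> \<in> R" for n
  proof (induction n)
    case (Suc n)
    let ?z = "y + (real n * d) *\<^sub>R \<alpha>"
    have "g ?z - f ?z = d"
      using linear_add[OF lf] linear_scale[OF lf] linear_add[OF lg] linear_scale[OF lg] f2 g2
      by (simp add: d_def)
    then show ?case
      using coroot_cond_shift[OF f g Suc.IH] by (simp add: algebra_simps)
  qed (simp add: y)
  have "inj (\<lambda>n::nat. y + (real n * d) *\<^sub>R \<alpha>)"
    by (rule injI) (use d root_nonzero[OF a] in auto)
  moreover have "range (\<lambda>n::nat. y + (real n * d) *\<^sub>R \<alpha>) \<subseteq> R"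
    using string by auto
  ultimately have "finite (UNIV :: nat set)"
    using finite_R inj_on_finite by blast
  then show False by simp
qed

lemma coroot_unique:
  assumes "\<alpha> \<in> R" and f: "coroot_cond R \<alpha> f" and "x \<in> V"
  shows "f x = coroot R \<alpha> x"
proof -
  have lf: "linear f" using f unfolding coroot_cond_def by simp
  have eq: "f y = coroot R \<alpha> y" if "y \<in> R" for y
    using coroot_cond_eq_on_R[OF assms(1) f coroot_cond_coroot[OF assms(1)] that] .
  have "(\<lambda>x. f x - coroot R \<alpha> x) x = 0"
    by (rule linear_eq_0_on_span[where b=R])
      (use lf linear_coroot[OF assms(1)] eq assms(3) span_R in \<open>auto intro: linear_compose_sub\<close>)
  then show ?thesis by simp
qed

definition reflect :: "'a \<Rightarrow> 'a \<Rightarrow> 'a" where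
  "reflect \<alpha> x = x - coroot R \<alpha> x *\<^sub>R \<alpha>"

lemma refl_eq: "refl V R \<alpha> = restrict (reflect \<alpha>) V"
  unfolding refl_def reflect_def ..

lemma linear_reflect: "\<alpha> \<in> R \<Longrightarrow> linear (reflect \<alpha>)"
  unfolding reflect_def[abs_def]
  by (rule linearI)
    (auto simp: linear_add[OF linear_coroot] linear_scale[OF linear_coroot] algebra_simps)

lemma reflect_in_R: "\<alpha> \<in> R \<Longrightarrow> \<beta> \<in> R \<Longrightarrow> reflect \<alpha> \<beta> \<in> R"
  using coroot_cond_coroot unfolding coroot_cond_def reflect_def by auto

lemma reflect_in_V: "\<alpha> \<in> R \<Longrightarrow> x \<in> V \<Longrightarrow> reflect \<alpha> x \<in> V"
  unfolding reflect_def using subspace_V root_in_V by (auto intro!: subspace_diff subspace_scale)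

lemma reflect_self [simp]: "\<alpha> \<in> R \<Longrightarrow> reflect \<alpha> \<alpha> = - \<alpha>"
  unfolding reflect_def using coroot_self by (simp add: scaleR_2)

lemma reflect_reflect [simp]:
  assumes "\<alpha> \<in> R" shows "reflect \<alpha> (reflect \<alpha> x) = x"
proof -
  have "coroot R \<alpha> (reflect \<alpha> x) = - coroot R \<alpha> x"
    using linear_diff[OF linear_coroot] linear_scale[OF linear_coroot] coroot_self assms
    unfolding reflect_def by simp
  then show ?thesis unfolding reflect_def[of \<alpha> "reflect \<alpha> x"] by (simp add: reflect_def)
qed

lemma uminus_in_R: "\<alpha> \<in> R \<Longrightarrow> - \<alpha> \<in> R"
  using reflect_in_R[of \<alpha> \<alpha>] by simp

lemma reflect_diff: "\<alpha> \<in> R \<Longrightarrow> reflect \<alpha> (x - y) = reflect \<alpha> x - reflect \<alpha> y"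
  and reflect_scale: "\<alpha> \<in> R \<Longrightarrow> reflect \<alpha> (c *\<^sub>R x) = c *\<^sub>R reflect \<alpha> x"
  and reflect_uminus_arg: "\<alpha> \<in> R \<Longrightarrow> reflect \<alpha> (- x) = - reflect \<alpha> x"
  using linear_diff linear_scale linear_neg linear_reflect by blast+

lemma coroot_reflect:
  assumes a: "\<alpha> \<in> R" and b: "\<beta> \<in> R" and x: "x \<in> V"
  shows "coroot R (reflect \<alpha> \<beta>) x = coroot R \<beta> (reflect \<alpha> x)"
proof -
  have "coroot_cond R (reflect \<alpha> \<beta>) (\<lambda>x. coroot R \<beta> (reflect \<alpha> x))"
    unfolding coroot_cond_def
  proof (intro conjI ballI)
    show "linear (\<lambda>x. coroot R \<beta> (reflect \<alpha> x))"
      using linear_compose[OF linear_reflect[OF a] linear_coroot[OF b]] by (simp add: o_def)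
    show "coroot R \<beta> (reflect \<alpha> (reflect \<alpha> \<beta>)) = 2" using a b coroot_self by simp
    fix y assume y: "y \<in> R"
    have "y - coroot R \<beta> (reflect \<alpha> y) *\<^sub>R reflect \<alpha> \<beta> = reflect \<alpha> (reflect \<beta> (reflect \<alpha> y))"
      unfolding reflect_def[of \<beta>] using a by (simp add: reflect_diff reflect_scale)
    then show "y - coroot R \<beta> (reflect \<alpha> y) *\<^sub>R reflect \<alpha> \<beta> \<in> R"
      using reflect_in_R a b y by simp
    show "coroot R \<beta> (reflect \<alpha> y) \<in> \<int>" using coroot_Ints reflect_in_R a b y by simp
  qed
  then show ?thesis using coroot_unique[OF reflect_in_R[OF a b] _ x] by simp
qed

lemma reflect_conj:
  assumes "\<alpha> \<in> R" "\<beta> \<in> R" "x \<in> V"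
  shows "reflect (reflect \<alpha> \<beta>) x = reflect \<alpha> (reflect \<beta> (reflect \<alpha> x))"
  unfolding reflect_def[of "reflect \<alpha> \<beta>"] coroot_reflect[OF assms]
  unfolding reflect_def[of \<beta>] using assms by (simp add: reflect_diff reflect_scale)

lemma reflect_uminus:
  assumes a: "\<alpha> \<in> R" and x: "x \<in> V"
  shows "reflect (- \<alpha>) x = reflect \<alpha> x"
proof -
  have "coroot_cond R (- \<alpha>) (\<lambda>x. - coroot R \<alpha> x)"
    using coroot_cond_coroot[OF a] linear_compose_neg[OF linear_coroot[OF a]]
    unfolding coroot_cond_def by (auto simp: linear_neg[OF linear_coroot[OF a]])
  then show ?thesis
    using coroot_unique[OF uminus_in_R[OF a] _ x] unfolding reflect_def by simp
qed

definition reflect_word :: "'a list \<Rightarrow> 'a \<Rightarrow> 'a" where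
  "reflect_word ws = foldr (\<lambda>\<alpha> f. reflect \<alpha> \<circ> f) ws id"

lemma reflect_word_Nil [simp]: "reflect_word [] = id"
  and reflect_word_Cons [simp]: "reflect_word (\<alpha> # ws) = reflect \<alpha> \<circ> reflect_word ws"
  unfolding reflect_word_def by simp_all

lemma reflect_word_append [simp]: "reflect_word (ws @ vs) = reflect_word ws \<circ> reflect_word vs"
  by (induction ws) auto

lemma linear_reflect_word: "set ws \<subseteq> R \<Longrightarrow> linear (reflect_word ws)"
  by (induction ws) (auto intro: linear_compose linear_reflect simp: linear_id)

lemma reflect_word_in_R: "set ws \<subseteq> R \<Longrightarrow> x \<in> R \<Longrightarrow> reflect_word ws x \<in> R"
  by (induction ws) (auto intro: reflect_in_R)

lemma reflect_word_in_V: "set ws \<subseteq> R \<Longrightarrow> x \<in> V \<Longrightarrow> reflect_word ws x \<in> V"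
  by (induction ws) (auto intro: reflect_in_V)

lemma reflect_reflect_word:
  assumes "set ws \<subseteq> R" "\<beta> \<in> R" "x \<in> V"
  shows "reflect (reflect_word ws \<beta>) x = reflect_word (ws @ [\<beta>] @ rev ws) x"
  using assms
proof (induction ws arbitrary: x)
  case (Cons \<alpha> ws)
  then show ?case
    using reflect_conj[of \<alpha> "reflect_word ws \<beta>" x] reflect_word_in_R reflect_in_V by simp
qed simp

lemma map_inv_refl:
  assumes b: "\<beta> \<in> R" shows "map_inv V (refl V R \<beta>) = refl V R \<beta>"
  unfolding map_inv_def refl_eq
proof (rule restrict_ext)
  fix y assume y: "y \<in> V"
  have "inj_on (restrict (reflect \<beta>) V) V"
    by (rule inj_onI) (metis b restrict_apply' reflect_reflect)
  then show "inv_into V (restrict (reflect \<beta>) V) y = reflect \<beta> y"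
    by (rule inv_into_f_eq) (use b y reflect_in_V in simp_all)
qed

lemma compose_refl_word:
  assumes "\<beta> \<in> R" "set ws \<subseteq> R"
  shows "compose V (refl V R \<beta>) (restrict (reflect_word ws) V) = restrict (reflect_word (\<beta> # ws)) V"
  unfolding compose_def refl_eq by (rule restrict_ext) (use assms reflect_word_in_V in simp)

lemma gen_group_in_words:
  assumes BR: "B \<subseteq> R" and "g \<in> gen_group V (refl V R ` B)"
  shows "\<exists>ws. set ws \<subseteq> B \<and> g = restrict (reflect_word ws) V"
  using assms(2)
proof induction
  case (gen_mult g s)
  then obtain ws \<beta> where ws: "set ws \<subseteq> B" "g = restrict (reflect_word ws) V"
    and \<beta>: "\<beta> \<in> B" "s = refl V R \<beta>" by blast
  have "compose V s g = restrict (reflect_word (\<beta> # ws)) V"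
    unfolding ws(2) \<beta>(2) by (rule compose_refl_word) (use ws \<beta> BR in auto)
  moreover have "set (\<beta> # ws) \<subseteq> B" using ws \<beta> by simp
  ultimately show ?case by blast
next
  case (gen_inv g s)
  then obtain ws \<beta> where ws: "set ws \<subseteq> B" "g = restrict (reflect_word ws) V"
    and \<beta>: "\<beta> \<in> B" "s = refl V R \<beta>" by blast
  then have "\<beta> \<in> R" using BR by auto
  have "compose V (map_inv V s) g = restrict (reflect_word (\<beta> # ws)) V"
    unfolding ws(2) \<beta>(2) map_inv_refl[OF \<open>\<beta> \<in> R\<close>]
    by (rule compose_refl_word) (use ws \<beta> BR in auto)
  moreover have "set (\<beta> # ws) \<subseteq> B" using ws \<beta> by simp
  ultimately show ?case by blast
qed (intro exI[of _ "[]"] conjI; simp only: reflect_word_Nil list.set empty_subsetI)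

lemma words_in_gen_group:
  assumes BR: "B \<subseteq> R"
  shows "set ws \<subseteq> B \<Longrightarrow> restrict (reflect_word ws) V \<in> gen_group V (refl V R ` B)"
proof (induction ws)
  case Nil
  show ?case by (simp only: reflect_word_Nil) (rule gen_id)
next
  case (Cons \<beta> ws)
  have "compose V (refl V R \<beta>) (restrict (reflect_word ws) V) \<in> gen_group V (refl V R ` B)"
    by (rule gen_mult[OF Cons.IH]) (use Cons.prems in auto)
  moreover have "compose V (refl V R \<beta>) (restrict (reflect_word ws) V)
      = restrict (reflect_word (\<beta> # ws)) V"
    by (rule compose_refl_word) (use Cons.prems BR in auto)
  ultimately show ?case by (simp only:)
qed

lemma gen_group_refl:
  "B \<subseteq> R \<Longrightarrow> gen_group V (refl V R ` B) = {restrict (reflect_word ws) V | ws. set ws \<subseteq> B}"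
  using gen_group_in_words words_in_gen_group by blast

lemma weyl_eq: "weyl V R = {restrict (reflect_word ws) V | ws. set ws \<subseteq> R}"
  unfolding weyl_def using gen_group_refl by blast

lemma reflect_word_eq_on_V:
  assumes ws: "set ws \<subseteq> R" and vs: "set vs \<subseteq> R"
    and eq: "\<And>x. x \<in> R \<Longrightarrow> reflect_word ws x = reflect_word vs x" and x: "x \<in> V"
  shows "reflect_word ws x = reflect_word vs x"
proof -
  have "(\<lambda>x. reflect_word ws x - reflect_word vs x) x = 0"
    by (rule linear_eq_0_on_span[where b=R])
      (use linear_reflect_word[OF ws] linear_reflect_word[OF vs] eq x span_R
        in \<open>auto intro: linear_compose_sub\<close>)
  then show ?thesis by simp
qed

lemma finite_weyl: "finite (weyl V R)"
proof (rule inj_on_finite[where f="\<lambda>g. restrict g R" and B="PiE R (\<lambda>_. R)"])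
  show "inj_on (\<lambda>g. restrict g R) (weyl V R)"
  proof (rule inj_onI)
    fix g1 g2 assume "g1 \<in> weyl V R" "g2 \<in> weyl V R" and eq: "restrict g1 R = restrict g2 R"
    then obtain ws vs where g: "g1 = restrict (reflect_word ws) V" "set ws \<subseteq> R"
      "g2 = restrict (reflect_word vs) V" "set vs \<subseteq> R"
      unfolding weyl_eq by auto
    have "reflect_word ws x = reflect_word vs x" if "x \<in> R" for x
      using fun_cong[OF eq, of x] that g root_in_V by simp
    then show "g1 = g2"
      unfolding g using reflect_word_eq_on_V[OF g(2) g(4)] by (intro restrict_ext) auto
  qed
  show "(\<lambda>g. restrict g R) ` weyl V R \<subseteq> PiE R (\<lambda>_. R)"
    unfolding weyl_eq using reflect_word_in_R root_in_V by auto
  show "finite (PiE R (\<lambda>_. R))" using finite_R by (simp add: finite_PiE)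
qed

end

section \<open>A Weyl-invariant inner product\<close>

context root_sys
begin

definition inv_inner :: "'a \<Rightarrow> 'a \<Rightarrow> real" where
  "inv_inner x y = (\<Sum>g\<in>weyl V R. inner (g x) (g y))"

lemma weyl_additive:
  assumes "g \<in> weyl V R" "x \<in> V" "y \<in> V"
  shows "g (x + y) = g x + g y" and "g (c *\<^sub>R x) = c *\<^sub>R g x"
proof -
  obtain ws where g: "g = restrict (reflect_word ws) V" "set ws \<subseteq> R"
    using assms(1) unfolding weyl_eq by auto
  have "x + y \<in> V" "c *\<^sub>R x \<in> V"
    using assms subspace_V by (auto intro: subspace_add subspace_scale)
  then show "g (x + y) = g x + g y" and "g (c *\<^sub>R x) = c *\<^sub>R g x"
    using assms g linear_add[OF linear_reflect_word] linear_scale[OF linear_reflect_word] by auto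
qed

lemma inv_inner_commute: "inv_inner x y = inv_inner y x"
  unfolding inv_inner_def by (simp add: inner_commute)

lemma inv_inner_add_left: "x \<in> V \<Longrightarrow> y \<in> V \<Longrightarrow> inv_inner (x + y) z = inv_inner x z + inv_inner y z"
  unfolding inv_inner_def by (simp add: weyl_additive inner_add_left sum.distrib)

lemma inv_inner_scale_left: "x \<in> V \<Longrightarrow> inv_inner (c *\<^sub>R x) z = c * inv_inner x z"
  unfolding inv_inner_def by (simp add: weyl_additive sum_distrib_left)

lemma inv_inner_scale_right: "x \<in> V \<Longrightarrow> inv_inner z (c *\<^sub>R x) = c * inv_inner z x"
  unfolding inv_inner_commute[of z] by (rule inv_inner_scale_left)

lemma inv_inner_diff_left:
  assumes "x \<in> V" "y \<in> V" shows "inv_inner (x - y) z = inv_inner x z - inv_inner y z"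
  using inv_inner_add_left[of x "(-1) *\<^sub>R y"] inv_inner_scale_left[of y "-1"] assms subspace_V
  by (simp add: subspace_neg)

lemma inv_inner_diff_right: "x \<in> V \<Longrightarrow> y \<in> V \<Longrightarrow> inv_inner z (x - y) = inv_inner z x - inv_inner z y"
  unfolding inv_inner_commute[of z] by (rule inv_inner_diff_left)

lemma inv_inner_sum_left:
  "finite F \<Longrightarrow> (\<And>d. d \<in> F \<Longrightarrow> f d \<in> V) \<Longrightarrow> inv_inner (sum f F) z = (\<Sum>d\<in>F. inv_inner (f d) z)"
proof (induction F rule: finite_induct)
  case empty
  show ?case using inv_inner_scale_left[of 0 0 z] subspace_0[OF subspace_V] by simp
next
  case (insert d F)
  then show ?case
    using inv_inner_add_left subspace_sum[OF subspace_V, of F f] by simp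
qed

lemma inv_inner_sum_right:
  "finite F \<Longrightarrow> (\<And>d. d \<in> F \<Longrightarrow> f d \<in> V) \<Longrightarrow> inv_inner z (sum f F) = (\<Sum>d\<in>F. inv_inner z (f d))"
  unfolding inv_inner_commute[of z] by (rule inv_inner_sum_left)

lemma inv_inner_pos:
  assumes "x \<in> V" "x \<noteq> 0" shows "inv_inner x x > 0"
proof -
  have "restrict id V \<in> weyl V R" unfolding weyl_eq by (auto intro!: exI[of _ "[]"])
  then have "inner (restrict id V x) (restrict id V x) \<le> inv_inner x x"
    unfolding inv_inner_def by (rule member_le_sum) (simp_all add: finite_weyl)
  moreover have "inner (restrict id V x) (restrict id V x) > 0" using assms by simp
  ultimately show ?thesis by linarith
qed

lemma inv_inner_root_pos: "\<alpha> \<in> R \<Longrightarrow> inv_inner \<alpha> \<alpha> > 0"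
  using inv_inner_pos root_in_V root_nonzero by blast

lemma inv_inner_reflect:
  assumes a: "\<alpha> \<in> R" and x: "x \<in> V" and y: "y \<in> V"
  shows "inv_inner (reflect \<alpha> x) (reflect \<alpha> y) = inv_inner x y"
proof -
  define \<Phi> where "\<Phi> g = restrict (g \<circ> reflect \<alpha>) V" for g :: "'a \<Rightarrow> 'a"
  have "\<Phi> ` weyl V R \<subseteq> weyl V R"
  proof
    fix g assume "g \<in> \<Phi> ` weyl V R"
    then obtain ws where g: "g = \<Phi> (restrict (reflect_word ws) V)" "set ws \<subseteq> R"
      unfolding weyl_eq by auto
    have "g = restrict (reflect_word (ws @ [\<alpha>])) V"
      unfolding g \<Phi>_def by (rule restrict_ext) (use reflect_in_V[OF a] in simp)
    then show "g \<in> weyl V R" unfolding weyl_eq using g a by (auto intro!: exI[of _ "ws @ [\<alpha>]"])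
  qed
  moreover have inj: "inj_on \<Phi> (weyl V R)"
  proof (rule inj_onI)
    fix g1 g2 assume g: "g1 \<in> weyl V R" "g2 \<in> weyl V R" and eq: "\<Phi> g1 = \<Phi> g2"
    have "g1 \<in> extensional V" "g2 \<in> extensional V" using g unfolding weyl_eq by auto
    then show "g1 = g2"
    proof (rule extensionalityI)
      fix z assume z: "z \<in> V"
      show "g1 z = g2 z" using fun_cong[OF eq, of "reflect \<alpha> z"] reflect_in_V[OF a z] a
        unfolding \<Phi>_def by simp
    qed
  qed
  ultimately have img: "\<Phi> ` weyl V R = weyl V R" using endo_inj_surj finite_weyl by blast
  have "inv_inner (reflect \<alpha> x) (reflect \<alpha> y) = (\<Sum>g\<in>weyl V R. inner (\<Phi> g x) (\<Phi> g y))"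
    unfolding inv_inner_def \<Phi>_def using x y by simp
  also have "\<dots> = (\<Sum>g\<in>\<Phi> ` weyl V R. inner (g x) (g y))"
    using sum.reindex[OF inj, of "\<lambda>g. inner (g x) (g y)"] by simp
  finally show ?thesis unfolding img inv_inner_def .
qed

lemma coroot_inv_inner:
  assumes a: "\<alpha> \<in> R" and x: "x \<in> V"
  shows "coroot R \<alpha> x = 2 * inv_inner x \<alpha> / inv_inner \<alpha> \<alpha>"
proof -
  have aV: "\<alpha> \<in> V" using root_in_V[OF a] .
  have "inv_inner x \<alpha> = inv_inner (reflect \<alpha> x) (reflect \<alpha> \<alpha>)"
    using inv_inner_reflect[OF a x aV] by simp
  also have "\<dots> = inv_inner (x - coroot R \<alpha> x *\<^sub>R \<alpha>) ((-1) *\<^sub>R \<alpha>)"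
    using a by (simp add: reflect_def[of \<alpha> x])
  also have "\<dots> = - inv_inner x \<alpha> + coroot R \<alpha> x * inv_inner \<alpha> \<alpha>"
    using inv_inner_diff_left[OF x subspace_scale[OF subspace_V aV]] inv_inner_scale_left[OF aV]
      inv_inner_scale_right[OF aV, of _ "-1", simplified] by simp
  finally show ?thesis using inv_inner_root_pos[OF a] by (simp add: field_simps)
qed

lemma coroot_pos_iff: "\<alpha> \<in> R \<Longrightarrow> \<beta> \<in> V \<Longrightarrow> coroot R \<alpha> \<beta> > 0 \<longleftrightarrow> inv_inner \<alpha> \<beta> > 0"
  and coroot_eq_0_iff: "\<alpha> \<in> R \<Longrightarrow> \<beta> \<in> V \<Longrightarrow> coroot R \<alpha> \<beta> = 0 \<longleftrightarrow> inv_inner \<alpha> \<beta> = 0"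
  using coroot_inv_inner[of \<alpha> \<beta>] inv_inner_root_pos[of \<alpha>] inv_inner_commute[of \<beta> \<alpha>]
  by (simp_all add: zero_less_divide_iff)

lemma inv_inner_strict_cauchy_schwarz:
  assumes x: "x \<in> V" and y: "y \<in> V" "y \<noteq> 0" and indep: "\<forall>t. x \<noteq> t *\<^sub>R y"
  shows "(inv_inner x y)\<^sup>2 < inv_inner x x * inv_inner y y"
proof -
  have yy: "inv_inner y y > 0" using inv_inner_pos y by auto
  define t where "t = inv_inner x y / inv_inner y y"
  define z where "z = x - t *\<^sub>R y"
  have ty: "t *\<^sub>R y \<in> V" using y subspace_V by (auto intro: subspace_scale)
  have "z \<in> V" "z \<noteq> 0" unfolding z_def using x ty indep subspace_V by (auto intro: subspace_diff)
  then have "0 < inv_inner z z" by (rule inv_inner_pos)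
  also have "inv_inner z z = inv_inner x x - 2 * t * inv_inner x y + t * t * inv_inner y y"
    unfolding z_def using x y ty
    by (simp add: inv_inner_diff_left inv_inner_diff_right inv_inner_scale_left
        inv_inner_scale_right inv_inner_commute[of y x] algebra_simps)
  also have "\<dots> = inv_inner x x - (inv_inner x y)\<^sup>2 / inv_inner y y"
    unfolding t_def using yy by (simp add: field_simps power2_eq_square)
  finally show ?thesis using yy by (simp add: field_simps)
qed

lemma coroot_mult_le_3:
  assumes a: "\<alpha> \<in> R" and b: "\<beta> \<in> R" and indep: "\<forall>t. \<alpha> \<noteq> t *\<^sub>R \<beta>"
  shows "coroot R \<alpha> \<beta> * coroot R \<beta> \<alpha> \<le> 3"
proof -
  have aa: "inv_inner \<alpha> \<alpha> > 0" and bb: "inv_inner \<beta> \<beta> > 0" using inv_inner_root_pos a b by auto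
  have "coroot R \<alpha> \<beta> * coroot R \<beta> \<alpha> = 4 * (inv_inner \<alpha> \<beta>)\<^sup>2 / (inv_inner \<alpha> \<alpha> * inv_inner \<beta> \<beta>)"
    using coroot_inv_inner[OF a root_in_V[OF b]] coroot_inv_inner[OF b root_in_V[OF a]]
      inv_inner_commute[of \<alpha> \<beta>] by (simp add: power2_eq_square)
  also have "\<dots> < 4"
    using inv_inner_strict_cauchy_schwarz[OF root_in_V[OF a] root_in_V[OF b] root_nonzero[OF b] indep]
      aa bb by (simp add: divide_less_eq)
  finally have lt: "coroot R \<alpha> \<beta> * coroot R \<beta> \<alpha> < 4" .
  obtain k where k: "coroot R \<alpha> \<beta> * coroot R \<beta> \<alpha> = of_int k"
    using coroot_Ints a b by (metis Ints_cases Ints_mult)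
  then have "k < 4" using lt by simp
  then show ?thesis using k by simp
qed

lemma inv_inner_combinations_nonpos:
  assumes "finite P" "finite N" "P \<subseteq> V" "N \<subseteq> V"
    and "\<And>d e. d \<in> P \<Longrightarrow> e \<in> N \<Longrightarrow> inv_inner d e \<le> 0"
    and "\<And>d. d \<in> P \<Longrightarrow> a d \<ge> 0" "\<And>e. e \<in> N \<Longrightarrow> b e \<ge> 0"
  shows "inv_inner (\<Sum>d\<in>P. a d *\<^sub>R d) (\<Sum>e\<in>N. b e *\<^sub>R e) \<le> 0"
proof -
  have V: "x \<in> V \<Longrightarrow> t *\<^sub>R x \<in> V" for t x using subspace_V by (rule subspace_scale)
  have right: "inv_inner d (\<Sum>e\<in>N. b e *\<^sub>R e) = (\<Sum>e\<in>N. b e * inv_inner d e)" for d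
    using assms(2,4) V by (simp add: inv_inner_sum_right inv_inner_scale_right subset_iff)
  have "inv_inner (\<Sum>d\<in>P. a d *\<^sub>R d) (\<Sum>e\<in>N. b e *\<^sub>R e)
      = (\<Sum>d\<in>P. a d * inv_inner d (\<Sum>e\<in>N. b e *\<^sub>R e))"
    using assms(1,3) V by (simp add: inv_inner_sum_left inv_inner_scale_left subset_iff)
  also have "\<dots> \<le> 0"
    unfolding right using assms(5-7) by (intro sum_nonpos mult_nonneg_nonpos) auto
  finally show ?thesis .
qed

lemma acute_roots_diff:
  assumes a: "\<alpha> \<in> R" and b: "\<beta> \<in> R" and indep: "\<forall>t. \<alpha> \<noteq> t *\<^sub>R \<beta>"
    and acute: "inv_inner \<alpha> \<beta> > 0"
  shows "\<alpha> - \<beta> = reflect \<beta> \<alpha> \<or> \<alpha> - \<beta> = - reflect \<alpha> \<beta>"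
proof -
  have indep': "\<forall>t. \<beta> \<noteq> t *\<^sub>R \<alpha>"
  proof (intro allI notI)
    fix t assume "\<beta> = t *\<^sub>R \<alpha>"
    moreover from this have "t \<noteq> 0" using root_nonzero[OF b] by auto
    ultimately have "\<alpha> = (1 / t) *\<^sub>R \<beta>" by simp
    then show False using indep by blast
  qed
  obtain i where i: "coroot R \<beta> \<alpha> = of_int i" by (rule Ints_cases[OF coroot_Ints[OF b a]])
  obtain j where j: "coroot R \<alpha> \<beta> = of_int j" by (rule Ints_cases[OF coroot_Ints[OF a b]])
  have "coroot R \<beta> \<alpha> > 0" "coroot R \<alpha> \<beta> > 0"
    using coroot_pos_iff[OF b root_in_V[OF a]] coroot_pos_iff[OF a root_in_V[OF b]] acute
    by (simp_all add: inv_inner_commute[of \<beta> \<alpha>])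
  then have "i \<ge> 1" "j \<ge> 1" unfolding i j by simp_all
  moreover have "real_of_int (i * j) \<le> 3" using coroot_mult_le_3[OF b a indep'] i j by simp
  then have "i * j \<le> 3" by linarith
  moreover have "\<not> (i \<ge> 2 \<and> j \<ge> 2)"
  proof
    assume "i \<ge> 2 \<and> j \<ge> 2"
    then have "2 * 2 \<le> i * j" by (intro mult_mono) auto
    then show False using \<open>i * j \<le> 3\<close> by simp
  qed
  ultimately have "i = 1 \<or> j = 1" by auto
  then show ?thesis using i j unfolding reflect_def by auto
qed

end

section \<open>Word length\<close>

context root_sys
begin

definition word_equiv :: "'a list \<Rightarrow> 'a list \<Rightarrow> bool" where
  "word_equiv ws vs \<longleftrightarrow> (\<forall>x\<in>V. reflect_word ws x = reflect_word vs x)"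

definition word_length :: "'a set \<Rightarrow> 'a list \<Rightarrow> nat" where
  "word_length X ws = (LEAST n. \<exists>vs. set vs \<subseteq> X \<and> length vs = n \<and> word_equiv vs ws)"

lemma word_equiv_refl [simp]: "word_equiv ws ws"
  and word_equiv_sym: "word_equiv ws vs \<Longrightarrow> word_equiv vs ws"
  and word_equiv_trans: "word_equiv ws vs \<Longrightarrow> word_equiv vs us \<Longrightarrow> word_equiv ws us"
  unfolding word_equiv_def by auto

declare word_equiv_trans [trans]

lemma word_equiv_append:
  assumes "word_equiv ws ws'" "word_equiv us us'" "set us \<subseteq> R"
  shows "word_equiv (ws @ us) (ws' @ us')"
  unfolding word_equiv_def
proof
  fix x assume "x \<in> V"
  then have "reflect_word ws (reflect_word us x) = reflect_word ws' (reflect_word us x)"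
    using assms(1,3) reflect_word_in_V unfolding word_equiv_def by blast
  then show "reflect_word (ws @ us) x = reflect_word (ws' @ us') x"
    using assms(2) \<open>x \<in> V\<close> unfolding word_equiv_def by simp
qed

lemma word_equiv_cancel: "\<alpha> \<in> R \<Longrightarrow> word_equiv (ws @ \<alpha> # \<alpha> # us) (ws @ us)"
  unfolding word_equiv_def by simp

lemma word_length_le: "set vs \<subseteq> X \<Longrightarrow> word_equiv vs ws \<Longrightarrow> word_length X ws \<le> length vs"
  unfolding word_length_def by (rule Least_le) auto

lemma reduced_word_exists:
  "set ws \<subseteq> X \<Longrightarrow> \<exists>vs. set vs \<subseteq> X \<and> length vs = word_length X ws \<and> word_equiv vs ws"
  unfolding word_length_def by (rule LeastI[of _ "length ws"]) (auto intro!: exI[of _ ws])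

lemma word_length_cong:
  assumes "word_equiv ws ws'" shows "word_length X ws = word_length X ws'"
proof -
  have "word_equiv vs ws \<longleftrightarrow> word_equiv vs ws'" for vs
    using assms word_equiv_sym word_equiv_trans by blast
  then show ?thesis unfolding word_length_def by simp
qed

lemma word_length_length: "set ws \<subseteq> X \<Longrightarrow> word_length X ws \<le> length ws"
  using word_length_le by auto

lemma word_length_append:
  assumes X: "X \<subseteq> R" and "set ws \<subseteq> X" "set us \<subseteq> X"
  shows "word_length X (ws @ us) \<le> word_length X ws + word_length X us"
proof -
  obtain vs where vs: "set vs \<subseteq> X" "length vs = word_length X ws" "word_equiv vs ws"
    using reduced_word_exists assms(2) by blast
  obtain vs' where vs': "set vs' \<subseteq> X" "length vs' = word_length X us" "word_equiv vs' us"
    using reduced_word_exists assms(3) by blast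
  have "word_equiv (vs @ vs') (ws @ us)"
    using vs vs' X by (intro word_equiv_append) auto
  then have "word_length X (ws @ us) \<le> length (vs @ vs')"
    using vs(1) vs'(1) by (intro word_length_le) auto
  then show ?thesis using vs(2) vs'(2) by simp
qed

lemma word_length_mono:
  assumes "X \<subseteq> Y" "set ws \<subseteq> X" shows "word_length Y ws \<le> word_length X ws"
proof -
  obtain vs where "set vs \<subseteq> X" "length vs = word_length X ws" "word_equiv vs ws"
    using reduced_word_exists[OF assms(2)] by blast
  then show ?thesis using word_length_le[of vs Y ws] assms(1) by auto
qed

lemma word_length_eq_0:
  assumes "set ws \<subseteq> X" "word_length X ws = 0" shows "word_equiv ws []"
proof -
  obtain vs where "length vs = word_length X ws" "word_equiv vs ws"
    using reduced_word_exists[OF assms(1)] by blast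
  then show ?thesis using assms(2) word_equiv_sym by auto
qed

lemma word_length_single:
  assumes "\<alpha> \<in> X" "X \<subseteq> R" shows "word_length X [\<alpha>] = 1"
proof -
  have "\<alpha> \<in> R" using assms by auto
  have "\<not> word_equiv [\<alpha>] []"
  proof
    assume "word_equiv [\<alpha>] []"
    then have "reflect \<alpha> \<alpha> = \<alpha>" using root_in_V[OF \<open>\<alpha> \<in> R\<close>] unfolding word_equiv_def by auto
    then have "- \<alpha> = \<alpha>" using \<open>\<alpha> \<in> R\<close> by simp
    then have "(2::real) *\<^sub>R \<alpha> = 0" by (metis add.inverse_inverse neg_eq_iff_add_eq_0 scaleR_2)
    then show False using \<open>\<alpha> \<in> R\<close> root_nonzero by simp
  qed
  then show ?thesis
    using word_length_length[of "[\<alpha>]" X] word_length_eq_0[of "[\<alpha>]" X] assms by fastforce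
qed

lemma reduced_word_distinct_adj:
  assumes X: "X \<subseteq> R" and ws: "set ws \<subseteq> X" "length ws = word_length X ws"
  shows "distinct_adj ws"
  unfolding distinct_adj_conv_nth
proof (intro allI impI notI)
  fix i assume i: "Suc i < length ws" and eq: "ws ! i = ws ! Suc i"
  define us where "us = take i ws @ drop (Suc (Suc i)) ws"
  have "i < length ws" using i by simp
  then have "ws ! i \<in> R" using ws(1) X nth_mem by blast
  have "ws = take i ws @ ws ! i # ws ! i # drop (Suc (Suc i)) ws"
    using i eq Cons_nth_drop_Suc[of i ws] Cons_nth_drop_Suc[of "Suc i" ws] append_take_drop_id[of i ws]
    by simp
  then have "word_equiv us ws"
    unfolding us_def using word_equiv_cancel[OF \<open>ws ! i \<in> R\<close>] word_equiv_sym by metis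
  moreover have "set us \<subseteq> X"
    unfolding us_def using ws(1) set_take_subset set_drop_subset by fastforce
  ultimately have "word_length X ws \<le> length us" by (rule word_length_le[rotated])
  then show False using ws i unfolding us_def by simp
qed

end

section \<open>Dihedral subsystems\<close>

fun alternating :: "nat \<Rightarrow> 'b \<Rightarrow> 'b \<Rightarrow> 'b list" where
  "alternating 0 x y = []"
| "alternating (Suc k) x y = alternating k y x @ [x]"

lemma set_alternating: "x \<in> A \<Longrightarrow> y \<in> A \<Longrightarrow> set (alternating k x y) \<subseteq> A"
  by (induction k arbitrary: x y) auto

lemma length_alternating [simp]: "length (alternating k x y) = k"
  by (induction k arbitrary: x y) auto

lemma alternating_add:
  "alternating (j + n) x y
    = alternating j (if even n then x else y) (if even n then y else x) @ alternating n x y"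
  by (induction n arbitrary: x y) auto

lemma map_alternating: "map f (alternating k x y) = alternating k (f x) (f y)"
  by (induction k arbitrary: x y) auto

lemma distinct_adj_two_letters:
  assumes "set ws \<subseteq> {x, y}" and "distinct_adj (ws @ [x])"
  shows "ws @ [x] = alternating (Suc (length ws)) x y"
  using assms
proof (induction ws arbitrary: x y rule: rev_induct)
  case (snoc c ws)
  then have "c = y" and "distinct_adj (ws @ [y])"
    by (auto simp: distinct_adj_append_iff)
  then show ?case using snoc.IH[of y x] snoc.prems(1) by (simp add: insert_commute)
qed simp

text \<open>The action of a word in two reflections \<open>s\<^sub>a, s\<^sub>b\<close> (letter \<open>True\<close> for \<open>a\<close>) only
  depends on the Cartan integers \<open>c\<^sub>1 = a\<^sup>\<or>(b)\<close>, \<open>c\<^sub>2 = b\<^sup>\<or>(a)\<close>: it is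
  \<open>z \<mapsto> z + (p\<^sub>1 a\<^sup>\<or>(z) + p\<^sub>2 b\<^sup>\<or>(z)) a + (q\<^sub>1 a\<^sup>\<or>(z) + q\<^sub>2 b\<^sup>\<or>(z)) b\<close> with
  \<open>(p\<^sub>1, p\<^sub>2, q\<^sub>1, q\<^sub>2) = rank2_coeffs c\<^sub>1 c\<^sub>2 word\<close>.  This reduces the dihedral
  relations to finitely many numerical evaluations.\<close>

fun rank2_coeffs :: "real \<Rightarrow> real \<Rightarrow> bool list \<Rightarrow> real \<times> real \<times> real \<times> real" where
  "rank2_coeffs c1 c2 [] = (0, 0, 0, 0)"
| "rank2_coeffs c1 c2 (True # bs) = (case rank2_coeffs c1 c2 bs of (p1, p2, q1, q2) \<Rightarrow>
     (- p1 - 1 - c1 * q1, - p2 - c1 * q2, q1, q2))"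
| "rank2_coeffs c1 c2 (False # bs) = (case rank2_coeffs c1 c2 bs of (p1, p2, q1, q2) \<Rightarrow>
     (p1, p2, - q1 - c2 * p1, - q2 - 1 - c2 * p2))"

definition obtuse_cartan_pair :: "real \<Rightarrow> real \<Rightarrow> bool" where
  "obtuse_cartan_pair c1 c2 \<longleftrightarrow>
     (c1, c2) \<in> {(0, 0), (-1, -1), (-1, -2), (-2, -1), (-1, -3), (-3, -1)}"

definition braid_order :: "real \<Rightarrow> real \<Rightarrow> nat" where
  "braid_order c1 c2 =
     (if c1 * c2 = 0 then 2 else if c1 * c2 = 1 then 3 else if c1 * c2 = 2 then 4 else 6)"

lemma braid_order_pos: "braid_order c1 c2 > 0"
  unfolding braid_order_def by auto

lemma rank2_coeffs_braid:
  "obtuse_cartan_pair c1 c2 \<Longrightarrow>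
    rank2_coeffs c1 c2 (alternating (braid_order c1 c2) False True)
    = rank2_coeffs c1 c2 (alternating (braid_order c1 c2) True False)"
  unfolding obtuse_cartan_pair_def braid_order_def by (auto simp: eval_nat_numeral)

lemma rank2_coeffs_nonneg:
  assumes "obtuse_cartan_pair c1 c2" "k < braid_order c1 c2"
  shows "case rank2_coeffs c1 c2 (alternating k False True) of (p1, p2, q1, q2) \<Rightarrow>
    1 + 2 * p1 + c2 * p2 \<ge> 0 \<and> 2 * q1 + c2 * q2 \<ge> 0"
proof -
  have "k < 6" using assms(2) unfolding braid_order_def by (auto split: if_splits)
  then have "k \<in> {0, 1, 2, 3, 4, 5}" by auto
  then show ?thesis
    using assms unfolding obtuse_cartan_pair_def braid_order_def by (auto simp: eval_nat_numeral)
qed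

lemma obtuse_cartan_pairI:
  fixes i j :: int
  assumes "i \<le> 0" "j \<le> 0" "i * j \<le> 3" "i = 0 \<longleftrightarrow> j = 0"
  shows "obtuse_cartan_pair (of_int i) (of_int j)"
proof (cases "i = 0")
  case False
  then have i1: "i \<le> -1" and j1: "j \<le> -1" using assms by auto
  have "i * (j + 1) \<ge> 0" "(i + 1) * j \<ge> 0" using i1 j1 by (auto intro: mult_nonpos_nonpos)
  then have "i \<ge> -3" "j \<ge> -3" using assms(3) by (simp_all add: algebra_simps)
  then have "i \<in> {-3, -2, -1}" "j \<in> {-3, -2, -1}" using i1 j1 by auto
  then show ?thesis using assms(3) unfolding obtuse_cartan_pair_def by auto
qed (use assms in \<open>auto simp: obtuse_cartan_pair_def\<close>)

context root_sys
begin

lemma reflect_rank2_combination: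
  assumes a: "a \<in> R" and b: "b \<in> R"
  shows "reflect a (z + P *\<^sub>R a + Q *\<^sub>R b)
    = z + (- P - coroot R a z - coroot R a b * Q) *\<^sub>R a + Q *\<^sub>R b"
proof -
  let ?t = "coroot R a z + 2 * P + coroot R a b * Q"
  have t: "coroot R a (z + P *\<^sub>R a + Q *\<^sub>R b) = ?t"
    using a b coroot_self linear_add[OF linear_coroot] linear_scale[OF linear_coroot] by simp
  have "(z + P *\<^sub>R a + Q *\<^sub>R b) - t *\<^sub>R a = z + (P - t) *\<^sub>R a + Q *\<^sub>R b" for t
    by (simp add: algebra_simps)
  then have "reflect a (z + P *\<^sub>R a + Q *\<^sub>R b) = z + (P - ?t) *\<^sub>R a + Q *\<^sub>R b"
    unfolding reflect_def t .
  also have "P - ?t = - P - coroot R a z - coroot R a b * Q" by simp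
  finally show ?thesis .
qed

lemma reflect_word_rank2:
  assumes a: "a \<in> R" and b: "b \<in> R"
  shows "set ws \<subseteq> {a, b} \<Longrightarrow>
    rank2_coeffs (coroot R a b) (coroot R b a) (map (\<lambda>c. c = a) ws) = (p1, p2, q1, q2) \<Longrightarrow>
    reflect_word ws z
      = z + (p1 * coroot R a z + p2 * coroot R b z) *\<^sub>R a + (q1 * coroot R a z + q2 * coroot R b z) *\<^sub>R b"
proof (induction ws arbitrary: p1 p2 q1 q2)
  case (Cons c ws)
  obtain r1 r2 s1 s2
    where r: "rank2_coeffs (coroot R a b) (coroot R b a) (map (\<lambda>c. c = a) ws) = (r1, r2, s1, s2)"
    by (metis prod_cases4)
  let ?P = "r1 * coroot R a z + r2 * coroot R b z" and ?Q = "s1 * coroot R a z + s2 * coroot R b z"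
  have IH: "reflect_word ws z = z + ?P *\<^sub>R a + ?Q *\<^sub>R b" using Cons r by auto
  show ?case
  proof (cases "c = a")
    case True
    then have e: "p1 = - r1 - 1 - coroot R a b * s1" "p2 = - r2 - coroot R a b * s2" "q1 = s1" "q2 = s2"
      using Cons.prems(2) r by auto
    have "reflect_word (c # ws) z = reflect a (z + ?P *\<^sub>R a + ?Q *\<^sub>R b)" using True IH by simp
    also have "\<dots> = z + (- ?P - coroot R a z - coroot R a b * ?Q) *\<^sub>R a + ?Q *\<^sub>R b"
      by (rule reflect_rank2_combination[OF a b])
    also have "\<dots> = z + (p1 * coroot R a z + p2 * coroot R b z) *\<^sub>R a
        + (q1 * coroot R a z + q2 * coroot R b z) *\<^sub>R b"
      unfolding e by (simp add: algebra_simps)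
    finally show ?thesis .
  next
    case False
    then have "c = b" and e: "p1 = r1" "p2 = r2" "q1 = - s1 - coroot R b a * r1"
      "q2 = - s2 - 1 - coroot R b a * r2"
      using Cons.prems r by auto
    then have "reflect_word (c # ws) z = reflect b (z + ?Q *\<^sub>R b + ?P *\<^sub>R a)"
      using IH by (simp add: add_ac)
    also have "\<dots> = z + (- ?Q - coroot R b z - coroot R b a * ?P) *\<^sub>R b + ?P *\<^sub>R a"
      by (rule reflect_rank2_combination[OF b a])
    also have "\<dots> = z + (p1 * coroot R a z + p2 * coroot R b z) *\<^sub>R a
        + (q1 * coroot R a z + q2 * coroot R b z) *\<^sub>R b"
      unfolding e by (simp add: algebra_simps)
    finally show ?thesis .
  qed
qed simp

lemma braid_relation:
  assumes a: "a \<in> R" and b: "b \<in> R" and "a \<noteq> b"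
    and ok: "obtuse_cartan_pair (coroot R a b) (coroot R b a)"
  defines "m \<equiv> braid_order (coroot R a b) (coroot R b a)"
  shows "word_equiv (alternating m b a) (alternating m a b)"
proof -
  obtain p1 p2 q1 q2
    where c: "rank2_coeffs (coroot R a b) (coroot R b a) (alternating m False True) = (p1, p2, q1, q2)"
    by (metis prod_cases4)
  moreover have "rank2_coeffs (coroot R a b) (coroot R b a) (alternating m True False) = (p1, p2, q1, q2)"
    using c rank2_coeffs_braid[OF ok] unfolding m_def by simp
  moreover have "map (\<lambda>c. c = a) (alternating m b a) = alternating m False True"
    "map (\<lambda>c. c = a) (alternating m a b) = alternating m True False"
    using map_alternating[of "\<lambda>c. c = a"] \<open>a \<noteq> b\<close> by simp_all
  moreover have "set (alternating m b a) \<subseteq> {a, b}" "set (alternating m a b) \<subseteq> {a, b}"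
    by (simp_all add: set_alternating)
  ultimately show ?thesis
    unfolding word_equiv_def using reflect_word_rank2[OF a b] by simp
qed

lemma reduced_word_alternating:
  assumes a: "a \<in> R" and b: "b \<in> R"
    and rs: "set rs \<subseteq> {a, b}" "length rs = word_length {a, b} rs"
    and long: "length rs \<le> word_length {a, b} (rs @ [a])"
  shows "rs = alternating (length rs) b a"
proof (cases rs rule: rev_cases)
  case (snoc us c)
  have "c \<noteq> a"
  proof
    assume "c = a"
    then have "word_equiv (rs @ [a]) us" using word_equiv_cancel[OF a, of us "[]"] snoc by simp
    then have "word_length {a, b} (rs @ [a]) \<le> length us"
      using rs(1) snoc by (intro word_length_le[OF _ word_equiv_sym]) auto
    then show False using long snoc by simp
  qed
  then have "c = b" using rs(1) snoc by auto
  moreover have "distinct_adj rs" using reduced_word_distinct_adj[OF _ rs] a b by auto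
  ultimately show ?thesis using distinct_adj_two_letters[of us b a] rs(1) snoc by auto
qed simp

lemma alternating_word_short:
  assumes a: "a \<in> R" and b: "b \<in> R" and "a \<noteq> b"
    and ok: "obtuse_cartan_pair (coroot R a b) (coroot R b a)"
    and long: "k \<le> word_length {a, b} (alternating k b a @ [a])"
  shows "k < braid_order (coroot R a b) (coroot R b a)"
proof (rule ccontr)
  define m where "m = braid_order (coroot R a b) (coroot R b a)"
  assume "\<not> k < braid_order (coroot R a b) (coroot R b a)"
  then have k: "k = (k - m) + m" unfolding m_def by simp
  obtain m' where m': "m = Suc m'" using braid_order_pos unfolding m_def by (metis gr0_implies_Suc)
  define pre where "pre = alternating (k - m) (if even m then b else a) (if even m then a else b)"
  have "alternating k b a @ [a] = pre @ alternating m b a @ [a]"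
    unfolding pre_def by (subst k) (simp add: alternating_add)
  also have "word_equiv \<dots> (pre @ alternating m a b @ [a])"
    using braid_relation[OF a b \<open>a \<noteq> b\<close> ok] a b unfolding m_def
    by (intro word_equiv_append) (auto simp: set_alternating)
  also have "pre @ alternating m a b @ [a] = (pre @ alternating m' b a) @ a # a # []"
    unfolding m' by simp
  also have "word_equiv \<dots> (pre @ alternating m' b a)"
    using word_equiv_cancel[OF a, of "pre @ alternating m' b a" "[]"] by simp
  finally have "word_length {a, b} (alternating k b a @ [a]) \<le> length (pre @ alternating m' b a)"
    unfolding pre_def by (intro word_length_le[OF _ word_equiv_sym]) (auto simp: set_alternating)
  also have "\<dots> < k" using k m' unfolding pre_def by simp
  finally show False using long by simp
qed

text \<open>Rank-two case of the cone lemma below: here a reduced word is alternating and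
  shorter than the braid order, and the coefficients are read off from \<open>rank2_coeffs\<close>.\<close>

lemma rank2_cone:
  assumes a: "a \<in> R" and b: "b \<in> R" and "a \<noteq> b"
    and ok: "obtuse_cartan_pair (coroot R a b) (coroot R b a)"
    and us: "set us \<subseteq> {a, b}" and long: "word_length {a, b} us \<le> word_length {a, b} (us @ [a])"
  shows "\<exists>x y. x \<ge> 0 \<and> y \<ge> 0 \<and> reflect_word us a = x *\<^sub>R a + y *\<^sub>R b"
proof -
  obtain rs where rs: "set rs \<subseteq> {a, b}" "length rs = word_length {a, b} us" "word_equiv rs us"
    using reduced_word_exists[OF us] by blast
  define k where "k = length rs"
  have "word_equiv (rs @ [a]) (us @ [a])" using word_equiv_append[OF rs(3)] a by simp
  then have long': "k \<le> word_length {a, b} (rs @ [a])"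
    using long rs(2) word_length_cong unfolding k_def by metis
  have "length rs = word_length {a, b} rs" using rs(2) word_length_cong[OF rs(3)] by simp
  then have "rs = alternating k b a"
    using reduced_word_alternating[OF a b rs(1)] long' unfolding k_def by simp
  then have "k < braid_order (coroot R a b) (coroot R b a)"
    using alternating_word_short[OF a b \<open>a \<noteq> b\<close> ok] long' by simp
  moreover obtain p1 p2 q1 q2
    where c: "rank2_coeffs (coroot R a b) (coroot R b a) (alternating k False True) = (p1, p2, q1, q2)"
    by (metis prod_cases4)
  ultimately have nonneg: "1 + 2 * p1 + coroot R b a * p2 \<ge> 0" "2 * q1 + coroot R b a * q2 \<ge> 0"
    using rank2_coeffs_nonneg[OF ok] by fastforce+
  have "reflect_word us a = reflect_word rs a" using rs(3) root_in_V[OF a] unfolding word_equiv_def by simp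
  also have "\<dots> = (1 + 2 * p1 + coroot R b a * p2) *\<^sub>R a + (2 * q1 + coroot R b a * q2) *\<^sub>R b"
    using reflect_word_rank2[OF a b rs(1), of p1 p2 q1 q2 a] c \<open>rs = alternating k b a\<close>
      map_alternating[of "\<lambda>c. c = a"] \<open>a \<noteq> b\<close> coroot_self[OF a]
    by (simp add: algebra_simps)
  finally show ?thesis using nonneg by blast
qed

end

section \<open>The cone lemma\<close>

definition nonneg_span :: "'a::real_vector set \<Rightarrow> 'a set" where
  "nonneg_span D = {\<Sum>d\<in>D. c d *\<^sub>R d | c. \<forall>d\<in>D. 0 \<le> c d}"

lemma nonneg_span_base: "finite D \<Longrightarrow> d \<in> D \<Longrightarrow> d \<in> nonneg_span D"
  unfolding nonneg_span_def
  by (intro CollectI exI[of _ "\<lambda>e. if e = d then 1 else 0"])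
    (simp add: if_distrib[of "\<lambda>c. c *\<^sub>R _"] sum.delta' cong: if_cong)

lemma nonneg_span_add: "x \<in> nonneg_span D \<Longrightarrow> y \<in> nonneg_span D \<Longrightarrow> x + y \<in> nonneg_span D"
  unfolding nonneg_span_def
proof safe
  fix c c' :: "'a \<Rightarrow> real" assume "\<forall>d\<in>D. 0 \<le> c d" "\<forall>d\<in>D. 0 \<le> c' d"
  then show "\<exists>c''. (\<Sum>d\<in>D. c d *\<^sub>R d) + (\<Sum>d\<in>D. c' d *\<^sub>R d) = (\<Sum>d\<in>D. c'' d *\<^sub>R d)
      \<and> (\<forall>d\<in>D. 0 \<le> c'' d)"
    by (intro exI[of _ "\<lambda>d. c d + c' d"]) (simp add: scaleR_add_left sum.distrib)
qed

lemma nonneg_span_scale: "x \<in> nonneg_span D \<Longrightarrow> t \<ge> 0 \<Longrightarrow> t *\<^sub>R x \<in> nonneg_span D"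
  unfolding nonneg_span_def
proof safe
  fix c :: "'a \<Rightarrow> real" assume "\<forall>d\<in>D. 0 \<le> c d" "t \<ge> 0"
  then show "\<exists>c'. t *\<^sub>R (\<Sum>d\<in>D. c d *\<^sub>R d) = (\<Sum>d\<in>D. c' d *\<^sub>R d) \<and> (\<forall>d\<in>D. 0 \<le> c' d)"
    by (intro exI[of _ "\<lambda>d. t * c d"]) (simp add: scaleR_sum_right)
qed

context root_sys
begin

lemma word_length_factorization_le:
  assumes DR: "D \<subseteq> R" and ID: "I \<subseteq> D"
    and "set vs \<subseteq> D" "set us \<subseteq> I" "word_equiv (vs @ us) ws"
  shows "word_length D ws \<le> word_length D vs + word_length I us"
proof -
  have "word_length D ws = word_length D (vs @ us)" using word_length_cong[OF assms(5)] by simp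
  also have "\<dots> \<le> word_length D vs + word_length D us"
    using word_length_append[OF DR assms(3)] assms(4) ID by auto
  also have "word_length D us \<le> word_length I us" using word_length_mono[OF ID assms(4)] .
  finally show ?thesis by simp
qed

lemma minimal_factorization:
  assumes DR: "D \<subseteq> R" and ID: "I \<subseteq> D"
    and vs0: "set vs0 \<subseteq> D" "set us0 \<subseteq> I" "word_equiv (vs0 @ us0) ws"
      "word_length D vs0 + word_length I us0 = word_length D ws"
  obtains vs us where "set vs \<subseteq> D" "set us \<subseteq> I" "word_equiv (vs @ us) ws"
    "word_length D vs + word_length I us = word_length D ws"
    "word_length D vs \<le> word_length D vs0"
    "\<And>e. e \<in> I \<Longrightarrow> word_length D vs \<le> word_length D (vs @ [e])"
proof -
  let ?n = "word_length D ws"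
  define A where "A = {vs. set vs \<subseteq> D \<and>
    (\<exists>us. set us \<subseteq> I \<and> word_equiv (vs @ us) ws \<and> word_length D vs + word_length I us = ?n)}"
  have "vs0 \<in> A" unfolding A_def using vs0 by blast
  then obtain vs where "vs \<in> A" and min: "\<And>vs'. vs' \<in> A \<Longrightarrow> word_length D vs \<le> word_length D vs'"
    using ex_has_least_nat[of "\<lambda>vs. vs \<in> A" vs0 "word_length D"] by blast
  then obtain us where vs: "set vs \<subseteq> D" and us: "set us \<subseteq> I" "word_equiv (vs @ us) ws"
    "word_length D vs + word_length I us = ?n"
    unfolding A_def by blast
  have "word_length D vs \<le> word_length D (vs @ [e])" if e: "e \<in> I" for e
  proof (rule ccontr)
    assume short: "\<not> ?thesis"
    have "e \<in> R" using e ID DR by auto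
    have set: "set (vs @ [e]) \<subseteq> D" "set (e # us) \<subseteq> I" using vs us(1) e ID by auto
    have "word_equiv ((vs @ [e]) @ (e # us)) (vs @ us)" using word_equiv_cancel[OF \<open>e \<in> R\<close>] by simp
    then have eq: "word_equiv ((vs @ [e]) @ (e # us)) ws" using us(2) word_equiv_trans by blast
    have "word_length I (e # us) \<le> word_length I [e] + word_length I us"
      using word_length_append[of I "[e]" us] e us(1) ID DR by auto
    then have "word_length D (vs @ [e]) + word_length I (e # us) \<le> ?n"
      using short us(3) word_length_single[OF e] ID DR by auto
    then have "vs @ [e] \<in> A"
      unfolding A_def using word_length_factorization_le[OF DR ID set eq] set eq
      by (intro CollectI conjI exI[of _ "e # us"]) auto
    then show False using min short by fastforce
  qed
  then show thesis using that vs us min[OF \<open>vs0 \<in> A\<close>] by blast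
qed

lemma factorization_right_long:
  assumes DR: "D \<subseteq> R" and ID: "I \<subseteq> D" and "\<delta> \<in> I"
    and vs: "set vs \<subseteq> D" and us: "set us \<subseteq> I" "word_equiv (vs @ us) ws"
    and len: "word_length D vs + word_length I us = word_length D ws"
    and long: "word_length D ws \<le> word_length D (ws @ [\<delta>])"
  shows "word_length I us \<le> word_length I (us @ [\<delta>])"
proof -
  have "\<delta> \<in> R" using assms(3) ID DR by auto
  then have "word_equiv (vs @ us @ [\<delta>]) (ws @ [\<delta>])"
    using word_equiv_append[OF us(2), of "[\<delta>]"] by simp
  then have "word_length D (ws @ [\<delta>]) \<le> word_length D vs + word_length I (us @ [\<delta>])"
    using word_length_factorization_le[OF DR ID vs, of "us @ [\<delta>]"] us(1) assms(3) by simp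
  then show ?thesis using len long by simp
qed

lemma reduced_word_last_letter:
  assumes X: "X \<subseteq> R" and ws: "set ws \<subseteq> X" and "\<delta> \<in> X" and "word_length X ws \<noteq> 0"
    and long: "word_length X ws \<le> word_length X (ws @ [\<delta>])"
  obtains vs \<delta>' where "\<delta>' \<in> X" "\<delta>' \<noteq> \<delta>" "set vs \<subseteq> X" "word_equiv (vs @ [\<delta>']) ws"
    "word_length X vs = word_length X ws - 1"
proof -
  obtain rs where rs: "set rs \<subseteq> X" "length rs = word_length X ws" "word_equiv rs ws"
    using reduced_word_exists[OF ws] by blast
  then have "rs \<noteq> []" using assms(4) by auto
  then obtain vs \<delta>' where rs': "rs = vs @ [\<delta>']" by (cases rs rule: rev_cases) auto
  have \<delta>': "\<delta>' \<in> X" "set vs \<subseteq> X" using rs(1) rs' by auto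
  have "word_length X ws \<le> word_length X vs + 1"
    using word_length_cong[OF rs(3)] word_length_append[OF X \<delta>'(2), of "[\<delta>']"]
      word_length_single[OF \<delta>'(1) X] \<delta>' rs' by simp
  then have len: "word_length X vs = word_length X ws - 1"
    using word_length_length[OF \<delta>'(2)] rs(2) rs' by simp
  have "\<delta>' \<noteq> \<delta>"
  proof
    assume "\<delta>' = \<delta>"
    have "\<delta> \<in> R" using \<open>\<delta> \<in> X\<close> X by auto
    have "word_equiv (ws @ [\<delta>]) (vs @ \<delta> # \<delta> # [])"
      using word_equiv_append[OF word_equiv_sym[OF rs(3)], of "[\<delta>]" "[\<delta>]"] \<open>\<delta> \<in> R\<close> \<open>\<delta>' = \<delta>\<close> rs'
      by simp
    then have "word_equiv (ws @ [\<delta>]) vs"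
      using word_equiv_trans word_equiv_cancel[OF \<open>\<delta> \<in> R\<close>, of vs "[]"] by simp
    then have "word_length X (ws @ [\<delta>]) = word_length X ws - 1" using word_length_cong len by metis
    then show False using long assms(4) by linarith
  qed
  then show thesis using that \<delta>' rs(3) rs' len by blast
qed

text \<open>The geometric heart of the proof (Tits' argument, cf. Humphreys, Reflection groups and
  Coxeter groups, 5.4): if the pairs in \<open>D\<close> have finite-type Cartan integers, then a word
  that does not get shorter by appending \<open>\<delta>\<close> maps \<open>\<delta>\<close> into the cone spanned by \<open>D\<close>.
  The induction splits the word at the rank-two subsystem \<open>{\<delta>, \<delta>'}\<close>, \<open>\<delta>'\<close> the last letter
  of a reduced expression.\<close>

lemma reflect_word_in_nonneg_span:
  assumes DR: "D \<subseteq> R" "finite D"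
    and ok: "\<And>a b. a \<in> D \<Longrightarrow> b \<in> D \<Longrightarrow> a \<noteq> b \<Longrightarrow> obtuse_cartan_pair (coroot R a b) (coroot R b a)"
  shows "set ws \<subseteq> D \<Longrightarrow> \<delta> \<in> D \<Longrightarrow> word_length D ws \<le> word_length D (ws @ [\<delta>]) \<Longrightarrow>
    reflect_word ws \<delta> \<in> nonneg_span D"
proof (induction "word_length D ws" arbitrary: ws \<delta> rule: less_induct)
  case less
  let ?n = "word_length D ws"
  have "\<delta> \<in> R" using less.prems(2) DR by auto
  show ?case
  proof (cases "?n = 0")
    case True
    then have "reflect_word ws \<delta> = \<delta>"
      using word_length_eq_0[OF less.prems(1)] root_in_V[OF \<open>\<delta> \<in> R\<close>] unfolding word_equiv_def by simp
    then show ?thesis using nonneg_span_base DR less.prems(2) by simp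
  next
    case False
    obtain rs \<delta>' where \<delta>': "\<delta>' \<in> D" "\<delta>' \<noteq> \<delta>" and rs: "set rs \<subseteq> D" "word_equiv (rs @ [\<delta>']) ws"
      "word_length D rs = ?n - 1"
      by (rule reduced_word_last_letter[OF DR(1) less.prems(1,2) False less.prems(3)])
    define I where "I = {\<delta>, \<delta>'}"
    have I: "I \<subseteq> D" "\<delta> \<in> I" using less.prems(2) \<delta>' unfolding I_def by auto
    obtain vs us where vs: "set vs \<subseteq> D" and us: "set us \<subseteq> I" "word_equiv (vs @ us) ws"
      and len: "word_length D vs + word_length I us = ?n" "word_length D vs \<le> word_length D rs"
      and min: "\<And>e. e \<in> I \<Longrightarrow> word_length D vs \<le> word_length D (vs @ [e])"
    proof (rule minimal_factorization[OF DR(1) I(1) rs(1), of "[\<delta>']" ws])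
      have "\<delta>' \<in> I" "I \<subseteq> R" using I(1) DR(1) unfolding I_def by auto
      then have "word_length I [\<delta>'] = 1" by (rule word_length_single)
      then show "word_length D rs + word_length I [\<delta>'] = ?n" using rs(3) False by simp
      show "set [\<delta>'] \<subseteq> I" unfolding I_def by simp
    qed (use rs(2) in blast)+
    have "word_length D vs < ?n" using len(2) rs(3) False by simp
    then have cone: "reflect_word vs \<delta> \<in> nonneg_span D" "reflect_word vs \<delta>' \<in> nonneg_span D"
      using less.hyps[OF _ vs less.prems(2) min] less.hyps[OF _ vs \<delta>'(1) min] unfolding I_def by simp_all
    have "word_length I us \<le> word_length I (us @ [\<delta>])"
      by (rule factorization_right_long[OF DR(1) I vs us len(1) less.prems(3)])
    moreover have "\<delta>' \<in> R" using \<delta>'(1) DR by auto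
    ultimately obtain x y where xy: "x \<ge> 0" "y \<ge> 0" "reflect_word us \<delta> = x *\<^sub>R \<delta> + y *\<^sub>R \<delta>'"
      using rank2_cone[OF \<open>\<delta> \<in> R\<close> \<open>\<delta>' \<in> R\<close> \<delta>'(2)[symmetric]
        ok[OF less.prems(2) \<delta>'(1) \<delta>'(2)[symmetric]] us(1)[unfolded I_def]]
      unfolding I_def by blast
    have "reflect_word ws \<delta> = reflect_word vs (reflect_word us \<delta>)"
      using us(2) root_in_V[OF \<open>\<delta> \<in> R\<close>] unfolding word_equiv_def by simp
    also have "\<dots> = x *\<^sub>R reflect_word vs \<delta> + y *\<^sub>R reflect_word vs \<delta>'"
      unfolding xy(3) using linear_reflect_word vs DR by (auto simp: linear_add linear_scale)
    finally show ?thesis using cone xy by (simp add: nonneg_span_add nonneg_span_scale)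
  qed
qed

definition orbit :: "'a set \<Rightarrow> 'a set" where
  "orbit D = {reflect_word ws d | ws d. set ws \<subseteq> D \<and> d \<in> D}"

lemma orbit_subset_R: "D \<subseteq> R \<Longrightarrow> orbit D \<subseteq> R"
  unfolding orbit_def using reflect_word_in_R by (auto simp: subset_iff)

lemma subset_orbit: "D \<subseteq> orbit D"
  unfolding orbit_def by (force intro: exI[of _ "[]"])

lemma reflect_word_orbit:
  assumes "set ws \<subseteq> D" "\<gamma> \<in> orbit D" shows "reflect_word ws \<gamma> \<in> orbit D"
proof -
  obtain vs d where "set vs \<subseteq> D" "d \<in> D" "\<gamma> = reflect_word vs d"
    using assms(2) unfolding orbit_def by blast
  then show ?thesis using assms(1) unfolding orbit_def by (auto intro!: exI[of _ "ws @ vs"])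
qed

lemma uminus_orbit:
  assumes "D \<subseteq> R" "\<gamma> \<in> orbit D" shows "- \<gamma> \<in> orbit D"
proof -
  obtain vs d where vs: "set vs \<subseteq> D" "d \<in> D" "\<gamma> = reflect_word vs d"
    using assms(2) unfolding orbit_def by blast
  then have "- \<gamma> = reflect_word (vs @ [d]) d"
    using assms(1) linear_neg[OF linear_reflect_word] by (auto simp: subset_iff)
  then show ?thesis using vs unfolding orbit_def by (auto intro!: exI[of _ "vs @ [d]"])
qed

lemma reflect_orbit_eq_word:
  assumes "D \<subseteq> R" "\<gamma> \<in> orbit D"
  obtains ws where "set ws \<subseteq> D" "\<And>x. x \<in> V \<Longrightarrow> reflect \<gamma> x = reflect_word ws x"
proof -
  obtain vs d where vs: "set vs \<subseteq> D" "d \<in> D" "\<gamma> = reflect_word vs d"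
    using assms(2) unfolding orbit_def by blast
  then have "reflect \<gamma> x = reflect_word (vs @ [d] @ rev vs) x" if "x \<in> V" for x
    using reflect_reflect_word[of vs d x] assms(1) that by auto
  then show ?thesis using that[of "vs @ [d] @ rev vs"] vs by auto
qed

lemma reflect_in_orbit:
  assumes "D \<subseteq> R" "\<alpha> \<in> orbit D" "\<beta> \<in> orbit D" shows "reflect \<alpha> \<beta> \<in> orbit D"
proof -
  obtain ws where "set ws \<subseteq> D" "\<And>x. x \<in> V \<Longrightarrow> reflect \<alpha> x = reflect_word ws x"
    using reflect_orbit_eq_word[OF assms(1,2)] by blast
  moreover have "\<beta> \<in> V" using assms(1,3) orbit_subset_R root_in_V by blast
  ultimately show ?thesis using reflect_word_orbit assms(3) by simp
qed

lemma orbit_in_nonneg_span: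
  assumes DR: "D \<subseteq> R" "finite D"
    and ok: "\<And>a b. a \<in> D \<Longrightarrow> b \<in> D \<Longrightarrow> a \<noteq> b \<Longrightarrow> obtuse_cartan_pair (coroot R a b) (coroot R b a)"
    and x: "x \<in> orbit D"
  shows "x \<in> nonneg_span D \<or> - x \<in> nonneg_span D"
proof -
  obtain ws \<delta> where ws: "set ws \<subseteq> D" "\<delta> \<in> D" "x = reflect_word ws \<delta>"
    using x unfolding orbit_def by blast
  have "\<delta> \<in> R" using ws DR by auto
  show ?thesis
  proof (cases "word_length D ws \<le> word_length D (ws @ [\<delta>])")
    case False
    have "word_equiv ((ws @ [\<delta>]) @ [\<delta>]) ws" using word_equiv_cancel[OF \<open>\<delta> \<in> R\<close>, of ws "[]"] by simp
    then have "word_length D (ws @ [\<delta>]) \<le> word_length D ((ws @ [\<delta>]) @ [\<delta>])"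
      using word_length_cong False by simp
    moreover have "set (ws @ [\<delta>]) \<subseteq> D" using ws by simp
    ultimately have "reflect_word (ws @ [\<delta>]) \<delta> \<in> nonneg_span D"
      using reflect_word_in_nonneg_span[OF DR ok _ ws(2)] by blast
    then show ?thesis
      using ws \<open>\<delta> \<in> R\<close> linear_neg[OF linear_reflect_word] DR by (simp add: subset_trans)
  qed (use reflect_word_in_nonneg_span[OF DR ok] ws in blast)
qed

end

section \<open>Heights\<close>

lemma vs_total_order_pos_add:
  "vs_total_order V le \<Longrightarrow> x \<in> V \<Longrightarrow> y \<in> V \<Longrightarrow> lt_of le 0 x \<Longrightarrow> lt_of le 0 y \<Longrightarrow>
    lt_of le 0 (x + y)"
  and vs_total_order_pos_scale:
  "vs_total_order V le \<Longrightarrow> x \<in> V \<Longrightarrow> lt_of le 0 x \<Longrightarrow> c > 0 \<Longrightarrow> lt_of le 0 (c *\<^sub>R x)"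
  unfolding vs_total_order_def by blast+

lemma vs_total_order_pos_or_neg:
  assumes ord: "vs_total_order V le" and V: "subspace V" and x: "x \<in> V" "x \<noteq> 0"
  shows "lt_of le 0 x \<or> lt_of le 0 (- x)"
proof -
  have "0 \<in> V" using subspace_0[OF V] .
  then have "le 0 x \<or> le x 0" "le x 0 \<longleftrightarrow> le 0 (0 - x)"
    using ord x(1) unfolding vs_total_order_def by blast+
  then show ?thesis using x(2) unfolding lt_of_def by auto
qed

lemma vs_total_order_pos_sum:
  assumes ord: "vs_total_order V le" and V: "subspace V"
    and F: "finite F" "F \<noteq> {}" "F \<subseteq> V" "\<forall>x\<in>F. lt_of le 0 x" and u: "\<forall>x\<in>F. u x > 0"
  shows "lt_of le 0 (\<Sum>x\<in>F. u x *\<^sub>R x) \<and> (\<Sum>x\<in>F. u x *\<^sub>R x) \<in> V"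
  using F u
proof (induction F rule: finite_ne_induct)
  case (singleton x)
  then show ?case using vs_total_order_pos_scale[OF ord] V by (auto intro: subspace_scale)
next
  case (insert x F)
  have "u x *\<^sub>R x \<in> V" "lt_of le 0 (u x *\<^sub>R x)"
    using insert vs_total_order_pos_scale[OF ord] V by (auto intro: subspace_scale)
  then show ?case using insert vs_total_order_pos_add[OF ord] V by (auto intro: subspace_add)
qed

text \<open>A compatible total order is positive on the finite set \<open>P\<close>, so \<open>0\<close> is not in the
  convex hull of \<open>P\<close>, and a separating hyperplane gives the functional.\<close>

lemma vs_total_order_separating_functional:
  fixes V :: "'a::euclidean_space set"
  assumes ord: "vs_total_order V le" and V: "subspace V"
    and P: "finite P" "P \<subseteq> V" "\<forall>x\<in>P. lt_of le 0 x"
  shows "\<exists>c. \<forall>x\<in>P. inner c x > 0"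
proof -
  have notin: "0 \<notin> convex hull P"
  proof
    assume "0 \<in> convex hull P"
    then obtain u where u: "\<forall>x\<in>P. 0 \<le> u x" "sum u P = 1" "(\<Sum>x\<in>P. u x *\<^sub>R x) = 0"
      using convex_hull_finite[OF P(1)] by auto
    define F where "F = {x\<in>P. u x > 0}"
    have "F \<noteq> {}"
    proof
      assume "F = {}"
      then have "\<forall>x\<in>P. u x = 0" using u(1) unfolding F_def by force
      then show False using u(2) by simp
    qed
    moreover have "finite F" "F \<subseteq> V" "\<forall>x\<in>F. lt_of le 0 x" "\<forall>x\<in>F. u x > 0"
      using P unfolding F_def by auto
    ultimately have "lt_of le 0 (\<Sum>x\<in>F. u x *\<^sub>R x)"
      using vs_total_order_pos_sum[OF ord V] by blast
    moreover have "(\<Sum>x\<in>P. u x *\<^sub>R x) = (\<Sum>x\<in>F. u x *\<^sub>R x)"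
      unfolding F_def by (rule sum.mono_neutral_right) (use P(1) u(1) in force)+
    ultimately show False using u(3) unfolding lt_of_def by simp
  qed
  have "closed (convex hull P)"
    by (rule compact_imp_closed[OF finite_imp_compact_convex_hull[OF P(1)]])
  from separating_hyperplane_closed_0[OF convex_convex_hull[of P] this notin]
  obtain a b where ab: "0 < b" "\<forall>x\<in>convex hull P. b < inner a x" by blast
  have "inner a x > 0" if "x \<in> P" for x
    using ab(1) ab(2)[rule_format, OF hull_inc[OF that]] by linarith
  then show ?thesis by blast
qed

locale ordered_root_sys = root_sys +
  fixes le :: "'a \<Rightarrow> 'a \<Rightarrow> bool"
  assumes reduced: "reduced R" and order: "vs_total_order V le"
begin

text \<open>A linear functional that is positive exactly on the positive roots; it replaces the
  ordering in all arguments and serves as the measure of the Nielsen descent.\<close>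

definition ht :: "'a \<Rightarrow> real" where
  "ht x = inner (SOME c. \<forall>\<gamma>\<in>pos_roots le R. inner c \<gamma> > 0) x"

lemma ht_pos_roots: "\<gamma> \<in> pos_roots le R \<Longrightarrow> ht \<gamma> > 0"
proof -
  have "finite (pos_roots le R)" "pos_roots le R \<subseteq> V" "\<forall>x\<in>pos_roots le R. lt_of le 0 x"
    using finite_R R_subset_V unfolding pos_roots_def by auto
  from vs_total_order_separating_functional[OF order subspace_V this]
  have "\<forall>\<gamma>\<in>pos_roots le R. inner (SOME c. \<forall>\<gamma>\<in>pos_roots le R. inner c \<gamma> > 0) \<gamma> > 0"
    by (rule someI_ex)
  then show "\<gamma> \<in> pos_roots le R \<Longrightarrow> ht \<gamma> > 0" unfolding ht_def by blast
qed

lemma ht_scale: "ht (c *\<^sub>R x) = c * ht x"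
  and ht_uminus: "ht (- x) = - ht x" and ht_diff: "ht (x - y) = ht x - ht y"
  and ht_sum: "ht (sum f F) = (\<Sum>x\<in>F. ht (f x))"
  unfolding ht_def by (auto simp: inner_add_right inner_diff_right inner_sum_right)

lemma pos_roots_iff_ht:
  assumes "\<gamma> \<in> R" shows "lt_of le 0 \<gamma> \<longleftrightarrow> ht \<gamma> > 0"
proof
  assume "ht \<gamma> > 0"
  show "lt_of le 0 \<gamma>"
  proof (rule ccontr)
    assume "\<not> lt_of le 0 \<gamma>"
    then have "- \<gamma> \<in> pos_roots le R"
      using vs_total_order_pos_or_neg[OF order subspace_V root_in_V root_nonzero] uminus_in_R assms
      unfolding pos_roots_def by blast
    then show False using ht_pos_roots \<open>ht \<gamma> > 0\<close> ht_uminus[of \<gamma>] by fastforce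
  qed
qed (use assms ht_pos_roots in \<open>auto simp: pos_roots_def\<close>)

lemma ht_root_nonzero:
  assumes "\<gamma> \<in> R" shows "ht \<gamma> \<noteq> 0"
proof
  assume "ht \<gamma> = 0"
  then have "\<not> lt_of le 0 \<gamma>" "\<not> lt_of le 0 (- \<gamma>)"
    using pos_roots_iff_ht assms uminus_in_R ht_uminus[of \<gamma>] by auto
  then show False
    using vs_total_order_pos_or_neg[OF order subspace_V root_in_V root_nonzero] assms by blast
qed

lemma pos_roots_ht: "S \<subseteq> R \<Longrightarrow> pos_roots le S = {\<gamma>\<in>S. ht \<gamma> > 0}"
  unfolding pos_roots_def using pos_roots_iff_ht by auto

lemma positive_roots_not_proportional:
  assumes "\<alpha> \<in> R" "\<beta> \<in> R" "ht \<alpha> > 0" "ht \<beta> > 0" "\<alpha> \<noteq> \<beta>"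
  shows "\<forall>t. \<alpha> \<noteq> t *\<^sub>R \<beta>"
proof (intro allI notI)
  fix t assume "\<alpha> = t *\<^sub>R \<beta>"
  then have "t = 1 \<or> t = -1" using reduced assms(1,2) unfolding reduced_def by blast
  then show False using \<open>\<alpha> = t *\<^sub>R \<beta>\<close> assms(3-5) ht_scale[of "-1" \<beta>] by auto
qed

lemma obtuse_cartan_pair_if_obtuse:
  assumes a: "\<alpha> \<in> R" "ht \<alpha> > 0" and b: "\<beta> \<in> R" "ht \<beta> > 0" and "\<alpha> \<noteq> \<beta>"
    and obtuse: "inv_inner \<alpha> \<beta> \<le> 0"
  shows "obtuse_cartan_pair (coroot R \<alpha> \<beta>) (coroot R \<beta> \<alpha>)"
proof -
  obtain i where i: "coroot R \<alpha> \<beta> = of_int i" by (rule Ints_cases[OF coroot_Ints[OF a(1) b(1)]])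
  obtain j where j: "coroot R \<beta> \<alpha> = of_int j" by (rule Ints_cases[OF coroot_Ints[OF b(1) a(1)]])
  have "inv_inner \<beta> \<alpha> \<le> 0" using obtuse by (simp add: inv_inner_commute[of \<beta> \<alpha>])
  then have "\<not> coroot R \<alpha> \<beta> > 0" "\<not> coroot R \<beta> \<alpha> > 0"
    using coroot_pos_iff[OF a(1) root_in_V[OF b(1)]] coroot_pos_iff[OF b(1) root_in_V[OF a(1)]] obtuse
    by simp_all
  moreover have "coroot R \<alpha> \<beta> = 0 \<longleftrightarrow> coroot R \<beta> \<alpha> = 0"
    using coroot_eq_0_iff[OF a(1) root_in_V[OF b(1)]] coroot_eq_0_iff[OF b(1) root_in_V[OF a(1)]]
    by (simp add: inv_inner_commute[of \<beta> \<alpha>])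
  ultimately have sign: "i \<le> 0" "j \<le> 0" "i = 0 \<longleftrightarrow> j = 0" unfolding i j by simp_all
  have "real_of_int (i * j) \<le> 3"
    using coroot_mult_le_3[OF a(1) b(1) positive_roots_not_proportional[OF a(1) b(1) a(2) b(2)
      \<open>\<alpha> \<noteq> \<beta>\<close>]] i j by simp
  then have "i * j \<le> 3" by linarith
  then show ?thesis unfolding i j using sign by (intro obtuse_cartan_pairI)
qed

lemma ht_nonneg_span:
  assumes "\<And>d. d \<in> D \<Longrightarrow> ht d > 0" and "x \<in> nonneg_span D"
  shows "ht x \<ge> 0"
proof -
  obtain c where c: "\<forall>d\<in>D. 0 \<le> c d" "x = (\<Sum>d\<in>D. c d *\<^sub>R d)"
    using assms(2) unfolding nonneg_span_def by blast
  have "ht x = (\<Sum>d\<in>D. c d * ht d)" unfolding c(2) by (simp add: ht_sum ht_scale)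
  also have "\<dots> \<ge> 0" using c(1) assms(1) by (intro sum_nonneg) (simp add: less_imp_le)
  finally show ?thesis .
qed

lemma ht_pos_combination:
  assumes "finite F" "F \<noteq> {}" "\<And>d. d \<in> F \<Longrightarrow> c d > 0 \<and> ht d > 0"
  shows "ht (\<Sum>d\<in>F. c d *\<^sub>R d) > 0"
  unfolding ht_sum ht_scale using assms by (intro sum_pos) auto

text \<open>Split a vanishing combination into its positive and negative part: their inner product
  is \<open>\<le> 0\<close>, so both vanish, and then \<open>ht\<close> forces all coefficients to be zero.\<close>

lemma obtuse_combination_eq_0:
  assumes D: "finite D" "D \<subseteq> V" "\<And>d. d \<in> D \<Longrightarrow> ht d > 0"
    and obtuse: "\<And>a b. a \<in> D \<Longrightarrow> b \<in> D \<Longrightarrow> a \<noteq> b \<Longrightarrow> inv_inner a b \<le> 0"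
    and zero: "(\<Sum>d\<in>D. c d *\<^sub>R d) = 0"
  shows "\<forall>d\<in>D. c d = 0"
proof -
  define P where "P = {d\<in>D. c d > 0}"
  define N where "N = {d\<in>D. c d < 0}"
  have fin: "finite P" "finite N" and sub: "P \<subseteq> V" "N \<subseteq> V" using D unfolding P_def N_def by auto
  have "(\<Sum>d\<in>D. c d *\<^sub>R d) = (\<Sum>d\<in>P \<union> N. c d *\<^sub>R d)"
    by (rule sum.mono_neutral_right) (use D(1) in \<open>auto simp: P_def N_def\<close>)
  also have "\<dots> = (\<Sum>d\<in>P. c d *\<^sub>R d) - (\<Sum>e\<in>N. (- c e) *\<^sub>R e)"
    by (subst sum.union_disjoint) (use fin in \<open>auto simp: P_def N_def sum_negf\<close>)
  finally have eq: "(\<Sum>d\<in>P. c d *\<^sub>R d) = (\<Sum>e\<in>N. (- c e) *\<^sub>R e)" using zero by simp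
  define x where "x = (\<Sum>d\<in>P. c d *\<^sub>R d)"
  have "x \<in> V" unfolding x_def using sub subspace_V by (auto intro!: subspace_sum subspace_scale)
  have "inv_inner x x = inv_inner (\<Sum>d\<in>P. c d *\<^sub>R d) (\<Sum>e\<in>N. (- c e) *\<^sub>R e)"
    unfolding x_def using eq by simp
  also have "\<dots> \<le> 0"
    by (rule inv_inner_combinations_nonpos[OF fin sub]) (auto simp: P_def N_def intro: obtuse)
  finally have "x = 0" using inv_inner_pos[OF \<open>x \<in> V\<close>] by fastforce
  have "P = {}"
  proof (rule ccontr)
    assume "P \<noteq> {}"
    then have "ht x > 0" unfolding x_def by (rule ht_pos_combination[OF fin(1)]) (auto simp: P_def D(3))
    then show False using \<open>x = 0\<close> ht_scale[of 0 0] by simp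
  qed
  moreover have "N = {}"
  proof (rule ccontr)
    assume "N \<noteq> {}"
    then have "ht x > 0" unfolding x_def eq by (rule ht_pos_combination[OF fin(2)]) (auto simp: N_def D(3))
    then show False using \<open>x = 0\<close> ht_scale[of 0 0] by simp
  qed
  ultimately have "\<not> c d > 0" "\<not> c d < 0" if "d \<in> D" for d using that unfolding P_def N_def by auto
  then show ?thesis by (meson linorder_neqE_linordered_idom)
qed

lemma nonneg_span_summand:
  assumes D: "finite D" "D \<subseteq> V" "\<And>d. d \<in> D \<Longrightarrow> ht d > 0"
    and obtuse: "\<And>a b. a \<in> D \<Longrightarrow> b \<in> D \<Longrightarrow> a \<noteq> b \<Longrightarrow> inv_inner a b \<le> 0"
    and x: "x \<in> nonneg_span D" and y: "y \<in> nonneg_span D" and "x + y = \<delta>" and "\<delta> \<in> D"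
  shows "\<exists>t. x = t *\<^sub>R \<delta>"
proof -
  obtain c c' where c: "\<forall>d\<in>D. 0 \<le> c d" "x = (\<Sum>d\<in>D. c d *\<^sub>R d)"
    and c': "\<forall>d\<in>D. 0 \<le> c' d" "y = (\<Sum>d\<in>D. c' d *\<^sub>R d)"
    using x y unfolding nonneg_span_def by blast
  define e where "e d = c d + c' d - (if d = \<delta> then 1 else 0)" for d
  have "(\<Sum>d\<in>D. e d *\<^sub>R d) = x + y - (\<Sum>d\<in>D. (if d = \<delta> then 1 else 0) *\<^sub>R d)"
    unfolding e_def c(2) c'(2) by (simp add: scaleR_diff_left scaleR_add_left sum.distrib sum_subtractf)
  also have "\<dots> = 0"
    using \<open>x + y = \<delta>\<close> \<open>\<delta> \<in> D\<close> D(1) by (simp add: if_distrib[of "\<lambda>t. t *\<^sub>R _"] sum.delta' cong: if_cong)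
  finally have "\<forall>d\<in>D. e d = 0" using obtuse_combination_eq_0[OF D obtuse] by blast
  then have "\<forall>d\<in>D. d \<noteq> \<delta> \<longrightarrow> c d = 0" using c(1) c'(1) unfolding e_def by force
  then have "x = (\<Sum>d\<in>D. if d = \<delta> then c d *\<^sub>R d else 0)" unfolding c(2) by (intro sum.cong) auto
  then show ?thesis using \<open>\<delta> \<in> D\<close> D(1) by (auto simp: sum.delta')
qed

end

section \<open>Pairwise obtuse positive roots form the base\<close>

locale obtuse_generators = ordered_root_sys +
  fixes S D :: "'a set"
  assumes S_roots: "S \<subseteq> R"
    and S_reflect: "\<And>\<alpha> \<beta>. \<alpha> \<in> S \<Longrightarrow> \<beta> \<in> S \<Longrightarrow> reflect \<alpha> \<beta> \<in> S"
    and S_orbit: "S \<subseteq> orbit D"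
    and D_S: "D \<subseteq> S"
    and D_pos: "\<And>d. d \<in> D \<Longrightarrow> ht d > 0"
    and D_obtuse: "\<And>a b. a \<in> D \<Longrightarrow> b \<in> D \<Longrightarrow> a \<noteq> b \<Longrightarrow> inv_inner a b \<le> 0"
begin

lemma D_roots: "D \<subseteq> R"
  using D_S S_roots by blast

lemma finite_D: "finite D"
  using D_roots finite_R by (rule finite_subset)

lemma D_V: "D \<subseteq> V"
  using D_roots R_subset_V by blast

lemma S_in_nonneg_span: "\<gamma> \<in> S \<Longrightarrow> \<gamma> \<in> nonneg_span D \<or> - \<gamma> \<in> nonneg_span D"
proof (rule orbit_in_nonneg_span[OF D_roots finite_D])
  fix a b assume "a \<in> D" "b \<in> D" "a \<noteq> b"
  then show "obtuse_cartan_pair (coroot R a b) (coroot R b a)"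
    using obtuse_cartan_pair_if_obtuse[of a b] D_roots D_pos D_obtuse by blast
qed (use S_orbit in blast)

lemma pos_root_in_nonneg_span:
  assumes "\<gamma> \<in> S" "ht \<gamma> > 0" shows "\<gamma> \<in> nonneg_span D"
proof -
  have "ht (- \<gamma>) < 0" using assms(2) ht_uminus by simp
  then have "- \<gamma> \<notin> nonneg_span D" using ht_nonneg_span[of D "- \<gamma>"] D_pos by fastforce
  then show ?thesis using S_in_nonneg_span[OF assms(1)] by blast
qed

lemma D_subset_base: "D \<subseteq> base le S"
proof
  fix \<delta> assume \<delta>: "\<delta> \<in> D"
  then have "\<delta> \<in> pos_roots le S" using D_S D_pos pos_roots_ht[OF S_roots] by auto
  moreover have "\<delta> \<noteq> \<beta> + \<gamma>" if "\<beta> \<in> pos_roots le S" "\<gamma> \<in> pos_roots le S" for \<beta> \<gamma>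
  proof
    assume sum: "\<delta> = \<beta> + \<gamma>"
    have \<beta>: "\<beta> \<in> S" "ht \<beta> > 0" and \<gamma>: "\<gamma> \<in> S" "ht \<gamma> > 0"
      using that pos_roots_ht[OF S_roots] by auto
    obtain t where "\<beta> = t *\<^sub>R \<delta>"
      using nonneg_span_summand[OF finite_D D_V D_pos D_obtuse pos_root_in_nonneg_span[OF \<beta>]
        pos_root_in_nonneg_span[OF \<gamma>] sum[symmetric] \<delta>] by blast
    moreover have "\<beta> \<in> R" "\<delta> \<in> R" using \<beta>(1) \<delta> S_roots D_roots by auto
    ultimately have "\<beta> = \<delta>"
      using positive_roots_not_proportional[OF \<open>\<beta> \<in> R\<close> \<open>\<delta> \<in> R\<close> \<beta>(2) D_pos[OF \<delta>]] by blast
    then have "\<gamma> = 0" using sum by simp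
    then show False using \<gamma>(1) S_roots zero_notin_R by blast
  qed
  ultimately show "\<delta> \<in> base le S" unfolding base_def by blast
qed

lemma exists_acute_generator:
  assumes "\<alpha> \<in> S" "ht \<alpha> > 0" shows "\<exists>d\<in>D. inv_inner d \<alpha> > 0"
proof (rule ccontr)
  assume "\<not> ?thesis"
  then have nonpos: "inv_inner d \<alpha> \<le> 0" if "d \<in> D" for d using that by (simp add: not_less)
  obtain c where c: "\<forall>d\<in>D. 0 \<le> c d" "\<alpha> = (\<Sum>d\<in>D. c d *\<^sub>R d)"
    using pos_root_in_nonneg_span[OF assms] unfolding nonneg_span_def by blast
  have "inv_inner (\<Sum>d\<in>D. c d *\<^sub>R d) \<alpha> = (\<Sum>d\<in>D. c d * inv_inner d \<alpha>)"
    using finite_D D_V subspace_V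
    by (simp add: inv_inner_sum_left inv_inner_scale_left subspace_scale subset_iff)
  also have "\<dots> \<le> 0" using c(1) nonpos by (intro sum_nonpos mult_nonneg_nonpos) auto
  finally have "inv_inner \<alpha> \<alpha> \<le> 0" unfolding c(2)[symmetric] .
  moreover have "\<alpha> \<in> R" using assms(1) S_roots by blast
  ultimately show False using inv_inner_root_pos by fastforce
qed

lemma base_subset_D: "base le S \<subseteq> D"
proof
  fix \<alpha> assume base: "\<alpha> \<in> base le S"
  then have \<alpha>: "\<alpha> \<in> S" "ht \<alpha> > 0" unfolding base_def pos_roots_ht[OF S_roots] by auto
  show "\<alpha> \<in> D"
  proof (rule ccontr)
    assume "\<alpha> \<notin> D"
    obtain d where d: "d \<in> D" "inv_inner d \<alpha> > 0" using exists_acute_generator[OF \<alpha>] by blast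
    have R: "\<alpha> \<in> R" "d \<in> R" using \<alpha>(1) d(1) S_roots D_roots by auto
    have "\<alpha> \<noteq> d" using \<open>\<alpha> \<notin> D\<close> d(1) by auto
    then have indep: "\<forall>t. \<alpha> \<noteq> t *\<^sub>R d"
      using positive_roots_not_proportional[OF R \<alpha>(2) D_pos[OF d(1)]] by blast
    have "d \<in> S" using d(1) D_S by auto
    have "reflect d \<alpha> \<in> S" "reflect \<alpha> d \<in> S" using S_reflect \<alpha>(1) \<open>d \<in> S\<close> by auto
    moreover have "- reflect \<alpha> d = reflect (reflect \<alpha> d) (reflect \<alpha> d)"
      using reflect_in_R[OF R] by simp
    ultimately have "- reflect \<alpha> d \<in> S" using S_reflect by simp
    moreover have "inv_inner \<alpha> d > 0" using d(2) inv_inner_commute[of d \<alpha>] by simp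
    ultimately have diff: "\<alpha> - d \<in> S"
      using acute_roots_diff[OF R indep] \<open>reflect d \<alpha> \<in> S\<close> by auto
    have "\<alpha> - d \<in> nonneg_span D"
    proof (rule ccontr)
      assume "\<alpha> - d \<notin> nonneg_span D"
      then have "d - \<alpha> \<in> nonneg_span D" using S_in_nonneg_span[OF diff] by simp
      moreover have "\<alpha> + (d - \<alpha>) = d" by simp
      ultimately obtain t where "\<alpha> = t *\<^sub>R d"
        using nonneg_span_summand[OF finite_D D_V D_pos D_obtuse pos_root_in_nonneg_span[OF \<alpha>]]
          d(1) by blast
      then show False using indep by blast
    qed
    then have "ht (\<alpha> - d) \<ge> 0" using ht_nonneg_span[of D "\<alpha> - d"] D_pos by blast
    moreover have "ht (\<alpha> - d) \<noteq> 0" using ht_root_nonzero diff S_roots by blast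
    ultimately have "ht (\<alpha> - d) > 0" by simp
    then have "d \<in> pos_roots le S" "\<alpha> - d \<in> pos_roots le S"
      using pos_roots_ht[OF S_roots] d(1) D_S D_pos \<open>\<alpha> - d \<in> S\<close> by auto
    moreover have "\<alpha> = d + (\<alpha> - d)" by simp
    ultimately show False using base unfolding base_def by blast
  qed
qed

lemma base_eq: "base le S = D"
  using D_subset_base base_subset_D by blast

end

section \<open>The reflection subsystem generated by a set of roots\<close>

locale refl_subsystem = root_sys +
  fixes B :: "'a set"
  assumes B_roots: "B \<subseteq> R"
begin

lemma orbit_B_roots: "orbit B \<subseteq> R"
  using orbit_subset_R[OF B_roots] .

lemma orbit_eq_gen_group: "{w \<beta> | w \<beta>. w \<in> gen_group V (refl V R ` B) \<and> \<beta> \<in> B} = orbit B"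
  unfolding gen_group_refl[OF B_roots]
proof (intro equalityI subsetI)
  have eval: "restrict (reflect_word ws) V \<beta> = reflect_word ws \<beta>" if "\<beta> \<in> B" for ws \<beta>
    using that B_roots root_in_V by auto
  fix x
  show "x \<in> orbit B"
    if x: "x \<in> {w \<beta> | w \<beta>. w \<in> {restrict (reflect_word ws) V | ws. set ws \<subseteq> B} \<and> \<beta> \<in> B}"
  proof -
    obtain ws \<beta> where "x = restrict (reflect_word ws) V \<beta>" "set ws \<subseteq> B" "\<beta> \<in> B"
      using x by blast
    then show ?thesis unfolding orbit_def using eval by auto
  qed
  show "x \<in> {w \<beta> | w \<beta>. w \<in> {restrict (reflect_word ws) V | ws. set ws \<subseteq> B} \<and> \<beta> \<in> B}"
    if x: "x \<in> orbit B"
  proof -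
    obtain ws \<beta> where "x = reflect_word ws \<beta>" "set ws \<subseteq> B" "\<beta> \<in> B"
      using x unfolding orbit_def by blast
    moreover from this have "x = restrict (reflect_word ws) V \<beta>" using eval by simp
    ultimately show ?thesis by blast
  qed
qed

lemma coroot_cond_orbit:
  assumes "\<alpha> \<in> orbit B" shows "coroot_cond (orbit B) \<alpha> (coroot R \<alpha>)"
  unfolding coroot_cond_def
proof (intro conjI ballI)
  have "\<alpha> \<in> R" using assms orbit_B_roots by blast
  then show "linear (coroot R \<alpha>)" "coroot R \<alpha> \<alpha> = 2" by (simp_all add: linear_coroot coroot_self)
  fix \<beta> assume "\<beta> \<in> orbit B"
  then show "\<beta> - coroot R \<alpha> \<beta> *\<^sub>R \<alpha> \<in> orbit B"
    using reflect_in_orbit[OF B_roots assms] unfolding reflect_def by blast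
  show "coroot R \<alpha> \<beta> \<in> \<int>" using coroot_Ints \<open>\<alpha> \<in> R\<close> \<open>\<beta> \<in> orbit B\<close> orbit_B_roots by blast
qed

lemma root_system_orbit: "root_system (span (orbit B)) (orbit B)"
  unfolding root_system_def
proof (intro conjI ballI)
  show "finite (orbit B)" using orbit_B_roots finite_R by (rule finite_subset)
  show "0 \<notin> orbit B" using orbit_B_roots zero_notin_R by blast
  show "\<exists>f. coroot_cond (orbit B) \<alpha> f" if "\<alpha> \<in> orbit B" for \<alpha>
    using coroot_cond_orbit[OF that] by blast
qed (auto intro: subspace_span span_base)

sublocale sub: root_sys "span (orbit B)" "orbit B"
  by unfold_locales (rule root_system_orbit)

lemma sub_reflect_word:
  "set ws \<subseteq> orbit B \<Longrightarrow> x \<in> span (orbit B) \<Longrightarrow> sub.reflect_word ws x = reflect_word ws x"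
proof (induction ws arbitrary: x)
  case (Cons \<alpha> ws)
  have \<alpha>: "\<alpha> \<in> orbit B" using Cons.prems(1) by simp
  have "sub.reflect \<alpha> y = reflect \<alpha> y" if "y \<in> span (orbit B)" for y
    using sub.coroot_unique[OF \<alpha> coroot_cond_orbit[OF \<alpha>] that]
    unfolding reflect_def sub.reflect_def by simp
  moreover have "sub.reflect_word ws x \<in> span (orbit B)"
    using sub.reflect_word_in_V Cons.prems by simp
  ultimately show ?case using Cons by simp
qed simp

lemma word_orbit_eq_word:
  "set ws \<subseteq> orbit B \<Longrightarrow> \<exists>vs. set vs \<subseteq> B \<and> (\<forall>x\<in>V. reflect_word ws x = reflect_word vs x)"
proof (induction ws)
  case (Cons \<alpha> ws)
  then obtain vs where vs: "set vs \<subseteq> B" "\<forall>x\<in>V. reflect_word ws x = reflect_word vs x" by auto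
  obtain us where us: "set us \<subseteq> B" "\<And>x. x \<in> V \<Longrightarrow> reflect \<alpha> x = reflect_word us x"
    using reflect_orbit_eq_word[OF B_roots] Cons.prems by auto
  have "\<forall>x\<in>V. reflect_word (\<alpha> # ws) x = reflect_word (us @ vs) x"
    using vs us reflect_word_in_V B_roots by auto
  then show ?case using vs us by (intro exI[of _ "us @ vs"]) auto
qed (auto intro: exI[of _ "[]"])

lemma weyl_orbit:
  "weyl (span (orbit B)) (orbit B) = (\<lambda>w. restrict w (span (orbit B))) ` gen_group V (refl V R ` B)"
proof -
  have V': "span (orbit B) \<subseteq> V" using span_mono[OF orbit_B_roots] span_R by auto
  have "weyl (span (orbit B)) (orbit B)
      = {restrict (reflect_word ws) (span (orbit B)) | ws. set ws \<subseteq> orbit B}"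
    unfolding sub.weyl_eq using sub_reflect_word by (metis (no_types, lifting) restrict_ext)
  also have "\<dots> = {restrict (reflect_word ws) (span (orbit B)) | ws. set ws \<subseteq> B}"
  proof (intro equalityI subsetI)
    fix g assume "g \<in> {restrict (reflect_word ws) (span (orbit B)) | ws. set ws \<subseteq> orbit B}"
    then obtain ws where ws: "g = restrict (reflect_word ws) (span (orbit B))" "set ws \<subseteq> orbit B"
      by auto
    obtain vs where "set vs \<subseteq> B" "\<forall>x\<in>V. reflect_word ws x = reflect_word vs x"
      using word_orbit_eq_word[OF ws(2)] by blast
    moreover from this have "g = restrict (reflect_word vs) (span (orbit B))"
      unfolding ws(1) using V' by (intro restrict_ext) auto
    ultimately show "g \<in> {restrict (reflect_word ws) (span (orbit B)) | ws. set ws \<subseteq> B}" by blast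
  qed (use subset_orbit in blast)
  also have "\<dots> = (\<lambda>w. restrict w (span (orbit B))) ` {restrict (reflect_word ws) V | ws. set ws \<subseteq> B}"
  proof -
    have e: "restrict (restrict (reflect_word ws) V) (span (orbit B)) = restrict (reflect_word ws) (span (orbit B))"
      for ws using V' by (intro restrict_ext) auto
    show ?thesis
    proof (intro equalityI subsetI)
      fix g assume "g \<in> {restrict (reflect_word ws) (span (orbit B)) | ws. set ws \<subseteq> B}"
      then obtain ws where "g = restrict (reflect_word ws) (span (orbit B))" "set ws \<subseteq> B" by blast
      then show "g \<in> (\<lambda>w. restrict w (span (orbit B))) ` {restrict (reflect_word ws) V | ws. set ws \<subseteq> B}"
        using e by (intro image_eqI[where x="restrict (reflect_word ws) V"]) auto
    next
      fix g assume "g \<in> (\<lambda>w. restrict w (span (orbit B))) ` {restrict (reflect_word ws) V | ws. set ws \<subseteq> B}"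
      then obtain ws where "g = restrict (restrict (reflect_word ws) V) (span (orbit B))" "set ws \<subseteq> B"
        by blast
      then show "g \<in> {restrict (reflect_word ws) (span (orbit B)) | ws. set ws \<subseteq> B}" using e by auto
    qed
  qed
  finally show ?thesis unfolding gen_group_refl[OF B_roots] .
qed

end

section \<open>Nielsen descent\<close>

lemma finite_descent_rtranclp:
  fixes f :: "'a \<Rightarrow> 'b::linorder"
  assumes "finite S" and "x \<in> S"
    and step: "\<And>x. x \<in> S \<Longrightarrow> \<not> P x \<Longrightarrow> \<exists>y\<in>S. f y < f x \<and> r (g x) (g y)"
  shows "\<exists>z\<in>S. P z \<and> r\<^sup>*\<^sup>* (g x) (g z)"
  using \<open>x \<in> S\<close>
proof (induction "card {y\<in>S. f y < f x}" arbitrary: x rule: less_induct)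
  case less
  show ?case
  proof (cases "P x")
    case False
    then obtain y where y: "y \<in> S" "f y < f x" "r (g x) (g y)" using step less.prems by blast
    have "{z\<in>S. f z < f y} \<subset> {z\<in>S. f z < f x}" using y by auto
    then have "card {z\<in>S. f z < f y} < card {z\<in>S. f z < f x}"
      using \<open>finite S\<close> by (intro psubset_card_mono) auto
    then obtain z where "z \<in> S" "P z" "r\<^sup>*\<^sup>* (g y) (g z)" using less.hyps y(1) by blast
    then show ?thesis using y(3) by (meson converse_rtranclp_into_rtranclp)
  qed (use less.prems in blast)
qed

context root_sys
begin

definition generates :: "'a set \<Rightarrow> 'a set \<Rightarrow> bool" where
  "generates D E \<longleftrightarrow>
    (\<forall>e\<in>E. \<exists>ws. set ws \<subseteq> D \<and> (\<forall>x\<in>V. reflect e x = reflect_word ws x)) \<and> E \<subseteq> orbit D"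

lemma generates_refl: "generates D D"
  unfolding generates_def using subset_orbit by (auto intro!: exI[of _ "[_]"])

lemma generates_word:
  assumes "D \<subseteq> R" "generates D E" "set ws \<subseteq> E"
  shows "\<exists>vs. set vs \<subseteq> D \<and> word_equiv ws vs"
  using assms(3)
proof (induction ws)
  case (Cons e ws)
  then obtain vs where vs: "set vs \<subseteq> D" "word_equiv ws vs" by auto
  obtain us where us: "set us \<subseteq> D" "\<forall>x\<in>V. reflect e x = reflect_word us x"
    using assms(2) Cons.prems unfolding generates_def by auto
  have "word_equiv (e # ws) (us @ vs)"
    unfolding word_equiv_def
  proof
    fix x assume "x \<in> V"
    moreover from this have "reflect_word vs x \<in> V" using reflect_word_in_V vs(1) assms(1) by auto
    ultimately show "reflect_word (e # ws) x = reflect_word (us @ vs) x"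
      using vs(2) us(2) unfolding word_equiv_def by simp
  qed
  then show ?case using vs us by (intro exI[of _ "us @ vs"]) auto
qed (auto intro: exI[of _ "[]"])

lemma orbit_subset_generates:
  assumes "D \<subseteq> R" "generates D E" shows "orbit E \<subseteq> orbit D"
proof
  fix \<gamma> assume "\<gamma> \<in> orbit E"
  then obtain ws e where ws: "set ws \<subseteq> E" "e \<in> E" "\<gamma> = reflect_word ws e"
    unfolding orbit_def by blast
  obtain vs where vs: "set vs \<subseteq> D" "word_equiv ws vs" using generates_word[OF assms ws(1)] by blast
  have "e \<in> orbit D" using assms(2) ws(2) unfolding generates_def by blast
  moreover from this have "e \<in> V" using orbit_subset_R[OF assms(1)] root_in_V by blast
  ultimately show "\<gamma> \<in> orbit D"
    using reflect_word_orbit[OF vs(1)] vs(2) ws(3) unfolding word_equiv_def by simp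
qed

lemma generates_trans:
  assumes "D \<subseteq> R" "generates D E" "generates E F" shows "generates D F"
  unfolding generates_def
proof
  show "\<forall>f\<in>F. \<exists>ws. set ws \<subseteq> D \<and> (\<forall>x\<in>V. reflect f x = reflect_word ws x)"
  proof
    fix f assume "f \<in> F"
    then obtain us where "set us \<subseteq> E" "\<forall>x\<in>V. reflect f x = reflect_word us x"
      using assms(3) unfolding generates_def by blast
    moreover obtain vs where "set vs \<subseteq> D" "word_equiv us vs"
      using generates_word[OF assms(1,2) \<open>set us \<subseteq> E\<close>] by blast
    ultimately show "\<exists>ws. set ws \<subseteq> D \<and> (\<forall>x\<in>V. reflect f x = reflect_word ws x)"
      unfolding word_equiv_def by auto
  qed
  show "F \<subseteq> orbit D"
    using assms(3) orbit_subset_generates[OF assms(1,2)] unfolding generates_def by blast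
qed

lemma generates_replace:
  assumes D: "D \<subseteq> R" and "a \<in> D" "b \<in> D" "a \<noteq> b"
    and b': "b' = reflect a b \<or> b' = - reflect a b"
  shows "generates (insert b' (D - {b})) D"
proof -
  let ?D' = "insert b' (D - {b})"
  have R: "a \<in> R" "b \<in> R" using D assms(2,3) by auto
  have "reflect a b \<in> R" using reflect_in_R[OF R] .
  then have D': "?D' \<subseteq> R" "a \<in> ?D'" using D b' uminus_in_R assms(2,4) by auto
  have conj: "reflect b x = reflect_word [a, b', a] x" if "x \<in> V" for x
  proof -
    have "reflect b' (reflect a x) = reflect (reflect a b) (reflect a x)"
      using b' reflect_uminus[OF \<open>reflect a b \<in> R\<close> reflect_in_V[OF R(1) that]] by (elim disjE) simp_all
    then show ?thesis using reflect_conj[OF R reflect_in_V[OF R(1) that]] R(1) by simp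
  qed
  have words: "\<exists>ws. set ws \<subseteq> ?D' \<and> (\<forall>x\<in>V. reflect d x = reflect_word ws x)" if "d \<in> D" for d
  proof (cases "d = b")
    case True
    then show ?thesis using conj D'(2) by (intro exI[of _ "[a, b', a]"]) auto
  next
    case False
    then show ?thesis using that by (intro exI[of _ "[d]"]) auto
  qed
  have "b' \<in> orbit ?D'" using subset_orbit[of ?D'] by auto
  then have orb: "reflect a b' \<in> orbit ?D'"
    using reflect_word_orbit[of "[a]" ?D' b'] D'(2) by simp
  have "reflect a b' = b \<or> reflect a b' = - b"
    using b' R(1) reflect_uminus_arg by (elim disjE) simp_all
  then have "b \<in> orbit ?D'"
  proof (elim disjE)
    assume "reflect a b' = - b"
    then show ?thesis using uminus_orbit[OF D'(1) orb] by simp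
  qed (use orb in simp)
  have "D \<subseteq> orbit ?D'"
  proof
    fix d assume "d \<in> D"
    then show "d \<in> orbit ?D'" using \<open>b \<in> orbit ?D'\<close> subset_orbit[of ?D'] by (cases "d = b") auto
  qed
  then show ?thesis unfolding generates_def using words by blast
qed

end

context ordered_root_sys
begin

lemma refl_inj_pos:
  assumes a: "\<alpha> \<in> R" "ht \<alpha> > 0" and b: "\<beta> \<in> R" "ht \<beta> > 0" and eq: "refl V R \<alpha> = refl V R \<beta>"
  shows "\<alpha> = \<beta>"
proof (rule ccontr)
  assume "\<alpha> \<noteq> \<beta>"
  have "reflect \<alpha> \<beta> = - \<beta>" using fun_cong[OF eq, of \<beta>] root_in_V[OF b(1)] b(1) unfolding refl_eq by simp
  then have two: "(2::real) *\<^sub>R \<beta> = coroot R \<alpha> \<beta> *\<^sub>R \<alpha>"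
    unfolding reflect_def by (simp add: algebra_simps scaleR_2)
  have "\<beta> = (1 / 2) *\<^sub>R ((2::real) *\<^sub>R \<beta>)" by simp
  also have "\<dots> = (coroot R \<alpha> \<beta> / 2) *\<^sub>R \<alpha>" unfolding two by simp
  finally have "\<beta> = (coroot R \<alpha> \<beta> / 2) *\<^sub>R \<alpha>" .
  then show False using positive_roots_not_proportional[OF b(1) a(1) b(2) a(2)] \<open>\<alpha> \<noteq> \<beta>\<close> by blast
qed

lemma refl_conj:
  assumes a: "\<alpha> \<in> R" and b: "\<beta> \<in> R"
  shows "compose V (compose V (refl V R \<alpha>) (refl V R \<beta>)) (map_inv V (refl V R \<alpha>))
    = refl V R (reflect \<alpha> \<beta>)"
  unfolding map_inv_refl[OF a] unfolding refl_eq compose_def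
  by (rule restrict_ext) (simp add: a b reflect_in_V reflect_conj)

lemma nielsen_step_replace:
  assumes D: "D \<subseteq> R" "\<And>d. d \<in> D \<Longrightarrow> ht d > 0" and "a \<in> D" "b \<in> D" "a \<noteq> b"
    and b': "b' = reflect a b \<or> b' = - reflect a b"
  shows "nielsen_step V (refl V R ` D) (refl V R ` insert b' (D - {b}))"
  unfolding nielsen_step_def
proof (intro bexI conjI)
  have "a \<in> R" "b \<in> R" using D(1) assms(3,4) by auto
  then have R: "a \<in> R" "b \<in> R" "reflect a b \<in> R" using reflect_in_R by auto
  show "refl V R a \<noteq> refl V R b" using refl_inj_pos R D assms(3-5) by blast
  have "refl V R b' = refl V R (reflect a b)"
    using b' reflect_uminus[OF R(3)] unfolding refl_eq by (auto intro: restrict_ext)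
  also have "\<dots> = compose V (compose V (refl V R a) (refl V R b)) (map_inv V (refl V R a))"
    using refl_conj[OF R(1,2)] by simp
  finally have "refl V R ` insert b' (D - {b})
      = insert (compose V (compose V (refl V R a) (refl V R b)) (map_inv V (refl V R a)))
          (refl V R ` (D - {b}))" by simp
  moreover have "refl V R ` (D - {b}) = refl V R ` D - {refl V R b}"
    using refl_inj_pos D assms(4) by (auto simp: subset_iff)
  ultimately show "refl V R ` insert b' (D - {b})
      = insert (compose V (compose V (refl V R a) (refl V R b)) (map_inv V (refl V R a)))
          (refl V R ` D - {refl V R b})" by simp
qed (use assms in auto)

text \<open>Otherwise the positive Cartan integers \<open>p = \<alpha>\<^sup>\<or>(\<beta>)\<close>, \<open>q = \<beta>\<^sup>\<or>(\<alpha>)\<close> satisfy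
  \<open>p ht \<alpha> \<ge> 2 ht \<beta>\<close> and \<open>q ht \<beta> \<ge> 2 ht \<alpha>\<close>, hence \<open>p q \<ge> 4\<close>.\<close>

lemma acute_pair_height_decrease:
  assumes a: "\<alpha> \<in> R" "ht \<alpha> > 0" and b: "\<beta> \<in> R" "ht \<beta> > 0" and "\<alpha> \<noteq> \<beta>"
    and acute: "inv_inner \<alpha> \<beta> > 0"
  shows "\<bar>ht (reflect \<alpha> \<beta>)\<bar> < ht \<beta> \<or> \<bar>ht (reflect \<beta> \<alpha>)\<bar> < ht \<alpha>"
proof (rule ccontr)
  define p where "p = coroot R \<alpha> \<beta>"
  define q where "q = coroot R \<beta> \<alpha>"
  have p: "p > 0" unfolding p_def using coroot_pos_iff[OF a(1) root_in_V[OF b(1)]] acute by simp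
  have q: "q > 0" unfolding q_def
    using coroot_pos_iff[OF b(1) root_in_V[OF a(1)]] acute inv_inner_commute[of \<beta> \<alpha>] by simp
  have "p * q \<le> 3" unfolding p_def q_def
    using coroot_mult_le_3[OF a(1) b(1) positive_roots_not_proportional[OF a(1) b(1) a(2) b(2)]]
      \<open>\<alpha> \<noteq> \<beta>\<close> by blast
  assume "\<not> ?thesis"
  then have abs: "\<bar>ht \<beta> - p * ht \<alpha>\<bar> \<ge> ht \<beta>" "\<bar>ht \<alpha> - q * ht \<beta>\<bar> \<ge> ht \<alpha>"
    unfolding p_def q_def reflect_def by (simp_all add: ht_diff ht_scale)
  have pos: "p * ht \<alpha> > 0" "q * ht \<beta> > 0" using p q a(2) b(2) by simp_all
  have e: "p * ht \<alpha> \<ge> 2 * ht \<beta>" "q * ht \<beta> \<ge> 2 * ht \<alpha>"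
    using abs pos by (smt (verit))+
  have "(p * ht \<alpha>) * (q * ht \<beta>) \<ge> (2 * ht \<beta>) * (2 * ht \<alpha>)"
    by (rule mult_mono[OF e]) (use pos a(2) b(2) in auto)
  then have "(p * q) * (ht \<alpha> * ht \<beta>) \<ge> 4 * (ht \<alpha> * ht \<beta>)" by (simp add: algebra_simps)
  then show False using \<open>p * q \<le> 3\<close> a(2) b(2) by (simp add: mult_le_cancel_right_pos)
qed

end

locale nielsen_setting = refl_subsystem V R B + ordered_root_sys V R le
  for V :: "'a::euclidean_space set" and R B le +
  assumes B_pos: "B \<subseteq> pos_roots le R"
begin

definition admissible :: "'a set \<Rightarrow> bool" where
  "admissible D \<longleftrightarrow> D \<subseteq> orbit B \<and> (\<forall>d\<in>D. ht d > 0) \<and> generates D B"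

lemma admissible_B: "admissible B"
  unfolding admissible_def using subset_orbit generates_refl B_pos ht_pos_roots by blast

lemma finite_admissible: "finite {D. admissible D}"
proof -
  have "finite (orbit B)" using orbit_B_roots finite_R by (rule finite_subset)
  then show ?thesis unfolding admissible_def by (auto intro: finite_subset[of _ "Pow (orbit B)"])
qed

lemma admissible_replace:
  assumes adm: "admissible D" and "a \<in> D" "b \<in> D" "a \<noteq> b"
    and shorter: "\<bar>ht (reflect a b)\<bar> < ht b"
  shows "\<exists>D'. admissible D' \<and> (\<Sum>d\<in>D'. ht d) < (\<Sum>d\<in>D. ht d)
    \<and> nielsen_step V (refl V R ` D) (refl V R ` D')"
proof -
  have D: "D \<subseteq> orbit B" "\<And>d. d \<in> D \<Longrightarrow> ht d > 0" "generates D B"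
    using adm unfolding admissible_def by auto
  have DR: "D \<subseteq> R" using D(1) orbit_B_roots by blast
  have "finite D" using D(1) orbit_B_roots finite_R finite_subset by metis
  define b' where "b' = (if ht (reflect a b) > 0 then reflect a b else - reflect a b)"
  have b': "b' = reflect a b \<or> b' = - reflect a b" unfolding b'_def by simp
  have "reflect a b \<in> orbit B" using reflect_in_orbit[OF B_roots] D(1) assms(2,3) by blast
  then have "b' \<in> orbit B" using uminus_orbit[OF B_roots] unfolding b'_def by simp
  have "ht (reflect a b) \<noteq> 0"
    using ht_root_nonzero orbit_B_roots \<open>reflect a b \<in> orbit B\<close> by blast
  then have ht_b': "ht b' = \<bar>ht (reflect a b)\<bar>" "ht b' > 0" unfolding b'_def by (auto simp: ht_uminus)
  define D' where "D' = insert b' (D - {b})"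
  have "generates D' B"
    unfolding D'_def using generates_trans generates_replace[OF DR assms(2-4) b'] D(3)
      \<open>b' \<in> orbit B\<close> DR orbit_B_roots by (metis Diff_subset insert_subset subset_trans)
  then have "admissible D'"
    unfolding admissible_def D'_def using D \<open>b' \<in> orbit B\<close> ht_b' by auto
  moreover have "(\<Sum>d\<in>D'. ht d) < (\<Sum>d\<in>D. ht d)"
  proof -
    have "(\<Sum>d\<in>D'. ht d) \<le> ht b' + (\<Sum>d\<in>D - {b}. ht d)"
      unfolding D'_def using \<open>finite D\<close> ht_b'(2) by (cases "b' \<in> D - {b}") (auto simp: insert_absorb)
    also have "\<dots> < ht b + (\<Sum>d\<in>D - {b}. ht d)" using ht_b'(1) shorter by simp
    also have "\<dots> = (\<Sum>d\<in>D. ht d)" using sum.remove[OF \<open>finite D\<close> assms(3), of ht] by simp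
    finally show ?thesis .
  qed
  moreover have "nielsen_step V (refl V R ` D) (refl V R ` D')"
    unfolding D'_def using nielsen_step_replace[OF DR D(2) assms(2-4) b'] .
  ultimately show ?thesis by blast
qed

lemma admissible_reduce:
  assumes adm: "admissible D" and "a \<in> D" "b \<in> D" "a \<noteq> b" and acute: "inv_inner a b > 0"
  shows "\<exists>D'. admissible D' \<and> (\<Sum>d\<in>D'. ht d) < (\<Sum>d\<in>D. ht d)
    \<and> nielsen_step V (refl V R ` D) (refl V R ` D')"
proof -
  have "a \<in> R" "b \<in> R" "ht a > 0" "ht b > 0"
    using adm assms(2,3) orbit_B_roots unfolding admissible_def by auto
  then have "\<bar>ht (reflect a b)\<bar> < ht b \<or> \<bar>ht (reflect b a)\<bar> < ht a"
    using acute_pair_height_decrease \<open>a \<noteq> b\<close> acute by blast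
  then show ?thesis
    using admissible_replace[OF adm assms(2-4)] admissible_replace[OF adm assms(3,2) assms(4)[symmetric]]
    by blast
qed

lemma base_admissible:
  assumes adm: "admissible D"
    and obtuse: "\<And>a b. a \<in> D \<Longrightarrow> b \<in> D \<Longrightarrow> a \<noteq> b \<Longrightarrow> inv_inner a b \<le> 0"
  shows "base le (orbit B) = D"
proof -
  interpret obtuse_generators V R le "orbit B" D
  proof
    show "orbit B \<subseteq> R" by (rule orbit_B_roots)
    show "reflect \<alpha> \<beta> \<in> orbit B" if "\<alpha> \<in> orbit B" "\<beta> \<in> orbit B" for \<alpha> \<beta>
      using reflect_in_orbit[OF B_roots that] .
    show "orbit B \<subseteq> orbit D"
      using orbit_subset_generates adm orbit_B_roots unfolding admissible_def by blast
    show "D \<subseteq> orbit B" using adm unfolding admissible_def by blast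
    show "ht d > 0" if "d \<in> D" for d using adm that unfolding admissible_def by blast
  qed (use obtuse in auto)
  show ?thesis by (rule base_eq)
qed

theorem nielsen_to_base: "(nielsen_step V)\<^sup>*\<^sup>* (refl V R ` B) (refl V R ` base le (orbit B))"
proof -
  obtain D where "admissible D" "\<forall>a\<in>D. \<forall>b\<in>D. a \<noteq> b \<longrightarrow> inv_inner a b \<le> 0"
    and "(nielsen_step V)\<^sup>*\<^sup>* (refl V R ` B) (refl V R ` D)"
    using finite_descent_rtranclp[OF finite_admissible, of B
        "\<lambda>D. \<forall>a\<in>D. \<forall>b\<in>D. a \<noteq> b \<longrightarrow> inv_inner a b \<le> 0" "\<lambda>D. \<Sum>d\<in>D. ht d" "nielsen_step V" "(`) (refl V R)"]
      admissible_B admissible_reduce by (force simp: not_le)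
  then show ?thesis using base_admissible by simp
qed

end

theorem theorem1p14:
  fixes V :: "'a::euclidean_space set" and R :: "'a set"
    and le :: "'a \<Rightarrow> 'a \<Rightarrow> bool" and B :: "'a set"
  assumes "root_system V R" and "reduced R"
    and "vs_total_order V le"
    and "B \<subseteq> pos_roots le R"
  defines "W' \<equiv> gen_group V (refl V R ` B)"
  defines "R' \<equiv> {w \<beta> | w \<beta>. w \<in> W' \<and> \<beta> \<in> B}"
  defines "V' \<equiv> span R'"
  shows "root_system V' R' \<and>
         weyl V' R' = (\<lambda>w. restrict w V') ` W' \<and>
         (nielsen_step V)\<^sup>*\<^sup>* (refl V R ` B) (refl V R ` base le R')"
proof -
  interpret nielsen_setting V R B le
    using assms(1-4) by unfold_locales (auto simp: pos_roots_def)
  have "R' = orbit B" unfolding R'_def W'_def by (rule orbit_eq_gen_group)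
  then show ?thesis
    unfolding V'_def W'_def using root_system_orbit weyl_orbit nielsen_to_base by simp
qed

end
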